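(* In the setting of the context, let $f:\mathcal{D}_{I_1}\times\cdots\times\mathcal{D}_{I_r}\to D/J$ be a polynomial function. Let $S=\{\mathbf{k}=(k_1,\ldots,k_r)\in\mathbb{N}^r:\ k_i<\mu(I_i,J)\text{ for all }1\le i\le r\}$. Then there exist coefficients $b_{\mathbf{k}}\in R$ ($\mathbf{k}\in S$), only finitely many nonzero, such that $F=\sum_{\mathbf{k}\in S}b_{\mathbf{k}}(\mathbf{x})_{\mathbf{k}}\in R[x_1,\ldots,x_r]$ represents $f$. Moreover, the coefficients are uniquely determined modulo the ideals $\operatorname{Ann}_J\big(v_{k_1}(X_1)\cdots v_{k_r}(X_r)\big)$: if $(b'_{\mathbf{k}})_{\mathbf{k}\in S}$ is another finitely supported family in $R$, then $\sum_{\mathbf{k}\in S}b'_{\mathbf{k}}(\mathbf{x})_{\mathbf{k}}$ also represents $f$ if and only if $b_{\mathbf{k}}-b'_{\mathbf{k}}\in\operatorname{Ann}_J\big(v_{k_1}(X_1)\cdots v_{k_r}(X_r)\big)$ for every $\mathbf{k}=(k_1,\ldots,k_r)\in S$.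
   Context: Standing setting. $D$ is a Dedekind domain, $r\ge1$, and $I_1,\ldots,I_r,J$ are ideals of $D$ different from $0$ and $D$. For each $i$ a complete set of residues $\mathcal{D}_{I_i}\subseteq D$ modulo $I_i$ with $0\in\mathcal{D}_{I_i}$ is fixed, identified with $D/I_i$. Let $K=\operatorname{lcm}[I_1,\ldots,I_r,J]=I_1\cap\cdots\cap I_r\cap J$ and $R=D/K$; for an ideal $I\supseteq K$ of $D$ write $\bar I=I/K\subseteq R$, so $R/\bar J\cong D/J$. Let $X_i\subseteq R$ be the image of $\mathcal{D}_{I_i}$ under $D\to R$ (the map is injective on $\mathcal{D}_{I_i}$, so $|X_i|=|D/I_i|$). Write $K=P_1^{e_1}\cdots P_n^{e_n}$ with distinct primes $P_l$ and $e_l\ge1$; the nonzero prime ideals of $R$ are $\bar P_1,\ldots,\bar P_n$. $P$-orderings. For a nonzero prime $\bar P$ of $R$ and $a\in R$, $w_{\bar P}(a)$ denotes the highest power of $\bar P$ containing $a$ (with $w_{\bar P}(0)$ the zero ideal); powers of $\bar P$ are totally ordered by inclusion. For a nonempty subset $X\subseteq R$, a $\bar P$-ordering of $X$ is a sequence $b_0,b_1,\ldots$ in $X$ with $b_0$ arbitrary and, for $k\ge1$, $b_k\in X$ chosen so that $w_{\bar P}\big((b_k-b_0)\cdots(b_k-b_{k-1})\big)$ is as large as possible (minimal exponent of $\bar P$). Its $\bar P$-sequence is $v_0(X,\bar P)=R$, $v_k(X,\bar P)=w_{\bar P}\big((b_k-b_0)\cdots(b_k-b_{k-1})\big)$ for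 $k\ge1$; it does not depend on the chosen $\bar P$-ordering, and for every $a\in X$ one has $w_{\bar P}((a-b_0)\cdots(a-b_{k-1}))\subseteq v_k(X,\bar P)$. The factorial ideals are $v_k(X)=\prod_{l=1}^n v_k(X,\bar P_l)$ (so $v_0(X)=R$, and $v_k(X)=0$ for $k\ge|X|$ if $X$ is finite). Fixed sequences. For each $i$ and $l$ fix a $\bar P_l$-ordering $(a_{l,i,j})_{j\in\mathbb{N}}$ of $X_i$ with $a_{l,i,0}=0$, and let $a_{i,j}\in R$ be the element with $a_{i,0}=0$ and $a_{i,j}\equiv a_{l,i,j}\pmod{\bar P_l^{e_l}}$ for all $l$ (Chinese Remainder Theorem). Then $v_k(X_i)=\langle (a_{i,k}-a_{i,0})\cdots(a_{i,k}-a_{i,k-1})\rangle$. For $\mathbf{k}=(k_1,\ldots,k_r)\in\mathbb{N}^r$ put $(\mathbf{x})_{\mathbf{k}}=\prod_{i=1}^r (x_i)_{k_i}$ where $(x_i)_0=1$ and $(x_i)_{k}=\prod_{j=0}^{k-1}(x_i-a_{i,j})$ for $k\ge1$. Further notation. $\mu(I_i,J)$ is the smallest positive integer $k$ with $v_k(X_i)\subseteq\bar J$ if such $k$ exists, and $|D/I_i|$ otherwise (possibly infinite). For an ideal $I$ of $R$, $\operatorname{Ann}_J(I)=\{b\in R: bI\subseteq\bar J\}$. Polynomial functions. A function $f:\mathcal{D}_{I_1}\times\cdots\times\mathcal{D}_{I_r}\to D/J$ is a polynomial function if some $F\in D[x_1,\ldots,x_r]$ satisfies $F(b)\equiv f(b)\pmod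 J$ for all $b\in\mathcal{D}_{I_1}\times\cdots\times\mathcal{D}_{I_r}$. A polynomial $F\in R[x_1,\ldots,x_r]$ represents $f$ if for every $b=(b_1,\ldots,b_r)\in\mathcal{D}_{I_1}\times\cdots\times\mathcal{D}_{I_r}$, the value of $F$ at the images of $b_1,\ldots,b_r$ in $R$ maps to $f(b)$ under $R\to R/\bar J=D/J$. *)

theory Defs
  imports Main "HOL-Library.FuncSet" "HOL-Library.Extended_Nat"
begin

text \<open>The Dedekind domain D is the whole of a type 'a of class idom. The quotient ring R = D/K is represented by
  elements of D taken modulo K; an ideal of R is represented by its preimage in D,
  i.e. an ideal of D containing K (the zero ideal of R is K itself).\<close>

definition is_ideal :: "'a::comm_ring_1 set \<Rightarrow> bool" where
  "is_ideal A \<longleftrightarrow> 0 \<in> A \<and> (\<forall>x\<in>A. \<forall>y\<in>A. x + y \<in> A) \<and> (\<forall>x\<in>A. \<forall>y. y * x \<in> A)"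

definition ideal_gen :: "'a::comm_ring_1 set \<Rightarrow> 'a set" where
  "ideal_gen S = \<Inter>{A. is_ideal A \<and> S \<subseteq> A}"

definition ideal_prod :: "'a::comm_ring_1 set \<Rightarrow> 'a set \<Rightarrow> 'a set" where
  "ideal_prod A B = ideal_gen {x * y | x y. x \<in> A \<and> y \<in> B}"

primrec ideal_pow :: "'a::comm_ring_1 set \<Rightarrow> nat \<Rightarrow> 'a set" where
  "ideal_pow A 0 = UNIV"
| "ideal_pow A (Suc m) = ideal_prod (ideal_pow A m) A"

primrec ideal_Prod :: "(nat \<Rightarrow> 'a::comm_ring_1 set) \<Rightarrow> nat \<Rightarrow> 'a set" where
  "ideal_Prod F 0 = UNIV"
| "ideal_Prod F (Suc m) = ideal_prod (ideal_Prod F m) (F m)"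

definition prime_ideal :: "'a::comm_ring_1 set \<Rightarrow> bool" where
  "prime_ideal Q \<longleftrightarrow> is_ideal Q \<and> Q \<noteq> UNIV \<and> (\<forall>x y. x * y \<in> Q \<longrightarrow> x \<in> Q \<or> y \<in> Q)"

definition dedekind_domain :: "'a::idom itself \<Rightarrow> bool" where
  "dedekind_domain T \<longleftrightarrow>
     (\<forall>A::'a set. is_ideal A \<and> A \<noteq> {0} \<and> A \<noteq> UNIV \<longrightarrow>
        (\<exists>m Q. m \<ge> 1 \<and> (\<forall>l<m. prime_ideal (Q l)) \<and> A = ideal_Prod Q m))"

definition residue_system :: "'a::comm_ring_1 set \<Rightarrow> 'a set \<Rightarrow> bool" where
  "residue_system A X \<longleftrightarrow> (\<forall>x. \<exists>!d. d \<in> X \<and> x - d \<in> A)"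

definition Rprod :: "'a::comm_ring_1 set \<Rightarrow> 'a set \<Rightarrow> 'a set \<Rightarrow> 'a set" where
  "Rprod K A B = ideal_gen ({x * y | x y. x \<in> A \<and> y \<in> B} \<union> K)"

primrec Rprod_fam :: "'a::comm_ring_1 set \<Rightarrow> (nat \<Rightarrow> 'a set) \<Rightarrow> nat \<Rightarrow> 'a set" where
  "Rprod_fam K F 0 = UNIV"
| "Rprod_fam K F (Suc m) = Rprod K (Rprod_fam K F m) (F m)"

text \<open>(preimage of) the power \<bar>P\<bar>^j of the ideal \<bar>P\<bar> = P/K of R\<close>
definition Rpow :: "'a::comm_ring_1 set \<Rightarrow> 'a set \<Rightarrow> nat \<Rightarrow> 'a set" where
  "Rpow K Q j = ideal_gen (ideal_pow Q j \<union> K)"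

text \<open>w_{\<bar>P\<bar>}(a): the highest power of \<bar>P\<bar> containing a; the zero ideal (i.e. K) if a = 0 in R.\<close>
definition wP :: "'a::comm_ring_1 set \<Rightarrow> 'a set \<Rightarrow> 'a \<Rightarrow> 'a set" where
  "wP K Q x = (if x \<in> K then K else
     (THE A. (\<exists>j. A = Rpow K Q j \<and> x \<in> A) \<and> (\<forall>j. x \<in> Rpow K Q j \<longrightarrow> A \<subseteq> Rpow K Q j)))"

text \<open>c is a \<bar>P\<bar>-ordering of X (X a set of representatives of a subset of R).\<close>
definition is_P_ordering :: "'a::comm_ring_1 set \<Rightarrow> 'a set \<Rightarrow> 'a set \<Rightarrow> (nat \<Rightarrow> 'a) \<Rightarrow> bool" where
  "is_P_ordering K Q X c \<longleftrightarrow> (\<forall>k. c k \<in> X) \<and>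
     (\<forall>k>0. \<forall>y\<in>X. wP K Q (\<Prod>j<k. y - c j) \<subseteq> wP K Q (\<Prod>j<k. c k - c j))"

definition vP :: "'a::comm_ring_1 set \<Rightarrow> 'a set \<Rightarrow> 'a set \<Rightarrow> nat \<Rightarrow> 'a set" where
  "vP K Q X k = (if k = 0 then UNIV else
     (let c = (SOME c. is_P_ordering K Q X c) in wP K Q (\<Prod>j<k. c k - c j)))"

definition vX :: "'a::comm_ring_1 set \<Rightarrow> (nat \<Rightarrow> 'a set) \<Rightarrow> nat \<Rightarrow> 'a set \<Rightarrow> nat \<Rightarrow> 'a set" where
  "vX K P n X k = Rprod_fam K (\<lambda>l. vP K (P l) X k) n"

text \<open>\<mu>(I,J), with X the residue system for I; \<infinity> if D/I is infinite.\<close>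
definition mu :: "'a::comm_ring_1 set \<Rightarrow> (nat \<Rightarrow> 'a set) \<Rightarrow> nat \<Rightarrow> 'a set \<Rightarrow> 'a set \<Rightarrow> enat" where
  "mu K P n J X = (if \<exists>k>0. vX K P n X k \<subseteq> J then enat (LEAST k. k > 0 \<and> vX K P n X k \<subseteq> J)
                   else (if finite X then enat (card X) else \<infinity>))"

definition Ann :: "'a::comm_ring_1 set \<Rightarrow> 'a set \<Rightarrow> 'a set" where
  "Ann J A = {c. \<forall>y\<in>A. c * y \<in> J}"

text \<open>Multivariate polynomials in x_0..x_{r-1} over D, as finitely supported
  coefficient families indexed by exponent vectors.\<close>
definition is_mpoly :: "nat \<Rightarrow> ((nat \<Rightarrow> nat) \<Rightarrow> 'a::comm_ring_1) \<Rightarrow> bool" where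
  "is_mpoly r c \<longleftrightarrow> finite {m. c m \<noteq> 0} \<and> (\<forall>m. c m \<noteq> 0 \<longrightarrow> m \<in> (\<Pi>\<^sub>E i\<in>{..<r}. UNIV))"

definition mpoly_eval :: "nat \<Rightarrow> ((nat \<Rightarrow> nat) \<Rightarrow> 'a::comm_ring_1) \<Rightarrow> (nat \<Rightarrow> 'a) \<Rightarrow> 'a" where
  "mpoly_eval r c x = (\<Sum>m\<in>{m. c m \<noteq> 0}. c m * (\<Prod>i<r. x i ^ m i))"

text \<open>f (values are representatives of D/J) is a polynomial function.\<close>
definition polynomial_function :: "nat \<Rightarrow> (nat \<Rightarrow> 'a::comm_ring_1 set) \<Rightarrow> 'a set \<Rightarrow> ((nat \<Rightarrow> 'a) \<Rightarrow> 'a) \<Rightarrow> bool" where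
  "polynomial_function r Dset J f \<longleftrightarrow>
     (\<exists>c. is_mpoly r c \<and> (\<forall>x\<in>(\<Pi>\<^sub>E i\<in>{..<r}. Dset i). mpoly_eval r c x - f x \<in> J))"

definition falling :: "(nat \<Rightarrow> nat \<Rightarrow> 'a::comm_ring_1) \<Rightarrow> nat \<Rightarrow> (nat \<Rightarrow> nat) \<Rightarrow> (nat \<Rightarrow> 'a) \<Rightarrow> 'a" where
  "falling a r k x = (\<Prod>i<r. \<Prod>j<k i. (x i - a i j))"

definition index_set :: "'a::comm_ring_1 set \<Rightarrow> (nat \<Rightarrow> 'a set) \<Rightarrow> nat \<Rightarrow> 'a set \<Rightarrow> (nat \<Rightarrow> 'a set) \<Rightarrow> nat \<Rightarrow> (nat \<Rightarrow> nat) set" where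
  "index_set K P n J Dset r = {k \<in> (\<Pi>\<^sub>E i\<in>{..<r}. UNIV). \<forall>i<r. enat (k i) < mu K P n J (Dset i)}"

definition Rsupp :: "'a::comm_ring_1 set \<Rightarrow> (nat \<Rightarrow> nat) set \<Rightarrow> ((nat \<Rightarrow> nat) \<Rightarrow> 'a) \<Rightarrow> (nat \<Rightarrow> nat) set" where
  "Rsupp K S b = {k \<in> S. b k \<notin> K}"

definition represents :: "'a::comm_ring_1 set \<Rightarrow> 'a set \<Rightarrow> (nat \<Rightarrow> 'a set) \<Rightarrow> nat \<Rightarrow> (nat \<Rightarrow> nat \<Rightarrow> 'a)
     \<Rightarrow> (nat \<Rightarrow> nat) set \<Rightarrow> ((nat \<Rightarrow> nat) \<Rightarrow> 'a) \<Rightarrow> ((nat \<Rightarrow> 'a) \<Rightarrow> 'a) \<Rightarrow> bool" where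
  "represents K J Dset r a S b f \<longleftrightarrow>
     (\<forall>x\<in>(\<Pi>\<^sub>E i\<in>{..<r}. Dset i). (\<Sum>k\<in>Rsupp K S b. b k * falling a r k x) - f x \<in> J)"

end

theory Submission
  imports Defs
begin

text \<open>
  Over the nodes a_i the products (x)_k of falling factorials form a basis of R[x], so every
  polynomial function has an expansion in them; the terms with some k_i \<ge> \<mu>(I_i, J) vanish
  modulo J on the grid and can be dropped. Uniqueness rests on two facts about the factorial
  ideals: every value of (x)_k on X_i lies in v_k(X_i), and v_k(X_i) is generated modulo K by the
  value of (x)_k at the node a_{i,k}. Both are local statements, checked at each primary
  component P_l^{e_l} of K, where a_i agrees with a P_l-ordering and the valuation of (x)_k at
  the k-th node is minimal; the Chinese remainder theorem glues them. A combination vanishing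
  modulo J on the grid is then evaluated at the nodes, and induction on k_1 + ... + k_r shows
  that each coefficient annihilates v_{k_1}(X_1) ... v_{k_r}(X_r) modulo J.

  The Dedekind hypothesis only provides factorisation into prime ideals, so
  the cancellation and maximality of nonzero primes are derived first (the classical argument
  comparing the factorisations of P + (a) and P + (a a) modulo P).
\<close>

section \<open>Ideals of a commutative ring\<close>

lemma is_idealI:
  assumes "0 \<in> A" "\<And>x y. x \<in> A \<Longrightarrow> y \<in> A \<Longrightarrow> x + y \<in> A" "\<And>x y. x \<in> A \<Longrightarrow> y * x \<in> A"
  shows "is_ideal A"
  using assms unfolding is_ideal_def by blast

lemma ideal_0: "is_ideal A \<Longrightarrow> 0 \<in> A" unfolding is_ideal_def by blast

lemma ideal_add: "is_ideal A \<Longrightarrow> x \<in> A \<Longrightarrow> y \<in> A \<Longrightarrow> x + y \<in> A" unfolding is_ideal_def by blast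

lemma ideal_multL: "is_ideal A \<Longrightarrow> x \<in> A \<Longrightarrow> y * x \<in> A" unfolding is_ideal_def by blast

lemma ideal_multR: "is_ideal A \<Longrightarrow> x \<in> A \<Longrightarrow> x * y \<in> A"
  using ideal_multL[of A x y] by (simp add: mult.commute)

lemma ideal_uminus: "is_ideal A \<Longrightarrow> (x::'a::comm_ring_1) \<in> A \<Longrightarrow> - x \<in> A"
  using ideal_multL[of A x "-1"] by simp

lemma ideal_diff: "is_ideal A \<Longrightarrow> (x::'a::comm_ring_1) \<in> A \<Longrightarrow> y \<in> A \<Longrightarrow> x - y \<in> A"
  using ideal_add[of A x "-y"] ideal_uminus[of A y] by simp

lemma sum_in_ideal: "is_ideal A \<Longrightarrow> (\<And>i. i \<in> S \<Longrightarrow> f i \<in> A) \<Longrightarrow> sum f S \<in> A"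
  by (induction S rule: infinite_finite_induct) (auto intro: ideal_0 ideal_add)

lemma ideal_UNIV: "is_ideal (UNIV::'a::comm_ring_1 set)" unfolding is_ideal_def by auto

lemma ideal_1: "is_ideal A \<Longrightarrow> 1 \<in> A \<Longrightarrow> A = UNIV"
  using ideal_multL[of A 1] by auto

lemma ideal_diff_mem: "is_ideal A \<Longrightarrow> (x::'a::comm_ring_1) - y \<in> A \<Longrightarrow> y \<in> A \<Longrightarrow> x \<in> A"
  using ideal_add[of A "x-y" y] by simp

lemma ideal_diff_iff:
  assumes A: "is_ideal A" and x: "(x::'a::comm_ring_1) \<in> A" shows "x - y \<in> A \<longleftrightarrow> y \<in> A"
proof
  assume "x - y \<in> A"
  thus "y \<in> A" using ideal_diff[OF A x, of "x - y"] by simp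
qed (rule ideal_diff[OF A x])

lemma gen_ideal: "is_ideal (ideal_gen S)"
  unfolding ideal_gen_def is_ideal_def by auto

lemma gen_sub: "S \<subseteq> ideal_gen S"
  unfolding ideal_gen_def by auto

lemma gen_mem: "x \<in> S \<Longrightarrow> x \<in> ideal_gen S"
  using gen_sub by auto

lemma gen_least: "is_ideal A \<Longrightarrow> S \<subseteq> A \<Longrightarrow> ideal_gen S \<subseteq> A"
  unfolding ideal_gen_def by auto

lemma gen_mono: "S \<subseteq> T \<Longrightarrow> ideal_gen S \<subseteq> ideal_gen T"
  by (meson gen_ideal gen_least gen_sub order_trans)

lemma gen_idem: "is_ideal A \<Longrightarrow> ideal_gen A = A"
  by (simp add: gen_least gen_sub subset_antisym)

lemma gen_gen_Un: "ideal_gen (ideal_gen S \<union> T) = ideal_gen (S \<union> T)"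
proof (rule subset_antisym)
  have "ideal_gen S \<subseteq> ideal_gen (S \<union> T)" by (rule gen_mono) blast
  thus "ideal_gen (ideal_gen S \<union> T) \<subseteq> ideal_gen (S \<union> T)"
    using gen_sub[of "S \<union> T"] by (intro gen_least[OF gen_ideal]) blast
  show "ideal_gen (S \<union> T) \<subseteq> ideal_gen (ideal_gen S \<union> T)"
    using gen_sub[of S] by (intro gen_mono) blast
qed

lemma gen_insert0: "ideal_gen (insert 0 S) = ideal_gen S"
proof (rule subset_antisym)
  show "ideal_gen (insert 0 S) \<subseteq> ideal_gen S"
    using gen_sub ideal_0[OF gen_ideal] by (intro gen_least[OF gen_ideal]) blast
qed (rule gen_mono, blast)

definition ideal_plus :: "'a::comm_ring_1 set \<Rightarrow> 'a set \<Rightarrow> 'a set" where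
  "ideal_plus A B = {x + y | x y. x \<in> A \<and> y \<in> B}"

definition principal_ideal :: "'a::comm_ring_1 \<Rightarrow> 'a set" where
  "principal_ideal a = {a * d | d. True}"

lemma is_ideal_principal_ideal: "is_ideal (principal_ideal a)"
proof (rule is_idealI)
  show "0 \<in> principal_ideal a" unfolding principal_ideal_def by (auto intro: exI[of _ 0])
  fix x y assume "x \<in> principal_ideal a" "y \<in> principal_ideal a"
  then obtain d e where "x = a * d" "y = a * e" unfolding principal_ideal_def by blast
  thus "x + y \<in> principal_ideal a" unfolding principal_ideal_def by (auto simp: distrib_left[symmetric])
next
  fix x y assume "x \<in> principal_ideal a"
  then obtain d where "x = a * d" unfolding principal_ideal_def by blast
  thus "y * x \<in> principal_ideal a" unfolding principal_ideal_def by (auto simp: mult.left_commute)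
qed

lemma principal_ideal_self: "(a::'a::comm_ring_1) \<in> principal_ideal a"
  unfolding principal_ideal_def by (auto intro: exI[of _ 1])

lemma principal_ideal_mem: "a * d \<in> principal_ideal a" unfolding principal_ideal_def by auto

lemma principal_ideal_sub: "is_ideal A \<Longrightarrow> a \<in> A \<Longrightarrow> principal_ideal a \<subseteq> A"
  unfolding principal_ideal_def using ideal_multR by blast

lemma ideal_plus_ideal: assumes "is_ideal A" "is_ideal B" shows "is_ideal (ideal_plus A B)"
proof (rule is_idealI)
  show "0 \<in> ideal_plus A B" unfolding ideal_plus_def using ideal_0[OF assms(1)] ideal_0[OF assms(2)] by force
  fix x y assume "x \<in> ideal_plus A B" "y \<in> ideal_plus A B"
  then obtain a b c d where "x = a + b" "y = c + d" "a \<in> A" "b \<in> B" "c \<in> A" "d \<in> B"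
    unfolding ideal_plus_def by blast
  moreover have "a + b + (c + d) = (a + c) + (b + d)" by (simp add: ac_simps)
  moreover have "a + c \<in> A" "b + d \<in> B" using ideal_add[OF assms(1)] ideal_add[OF assms(2)] calculation by auto
  ultimately show "x + y \<in> ideal_plus A B" unfolding ideal_plus_def by blast
next
  fix x y assume "x \<in> ideal_plus A B"
  then obtain a b where "x = a + b" "a \<in> A" "b \<in> B" unfolding ideal_plus_def by blast
  moreover have "y * (a + b) = y * a + y * b" by (simp add: distrib_left)
  moreover have "y * a \<in> A" "y * b \<in> B" using ideal_multL[OF assms(1)] ideal_multL[OF assms(2)] calculation by auto
  ultimately show "y * x \<in> ideal_plus A B" unfolding ideal_plus_def by blast
qed

lemma ideal_plus_memI: "x \<in> A \<Longrightarrow> y \<in> B \<Longrightarrow> x + y \<in> ideal_plus A B" unfolding ideal_plus_def by auto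

lemma ideal_plus_subL: "is_ideal B \<Longrightarrow> A \<subseteq> ideal_plus A B"
  unfolding ideal_plus_def by (force dest: ideal_0)

lemma ideal_plus_subR: "is_ideal A \<Longrightarrow> B \<subseteq> ideal_plus A B"
  unfolding ideal_plus_def by (force dest: ideal_0)

lemma ideal_plus_comm: "ideal_plus A B = ideal_plus B A"
  unfolding ideal_plus_def by (blast intro: add.commute)

lemma ideal_plus_least: "is_ideal C \<Longrightarrow> A \<subseteq> C \<Longrightarrow> B \<subseteq> C \<Longrightarrow> ideal_plus A B \<subseteq> C"
  unfolding ideal_plus_def by (auto intro: ideal_add)

lemma ideal_plus_mono: "A \<subseteq> A' \<Longrightarrow> B \<subseteq> B' \<Longrightarrow> ideal_plus A B \<subseteq> ideal_plus A' B'"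
  unfolding ideal_plus_def by blast

lemma ideal_plus_UNIV_D: "ideal_plus A B = UNIV \<Longrightarrow> (\<exists>u\<in>A. \<exists>v\<in>B. u + v = 1)"
proof -
  assume "ideal_plus A B = UNIV"
  hence "1 \<in> ideal_plus A B" by simp
  thus ?thesis unfolding ideal_plus_def by force
qed

lemma ideal_plus_UNIV_I: "is_ideal A \<Longrightarrow> is_ideal B \<Longrightarrow> u \<in> A \<Longrightarrow> v \<in> B \<Longrightarrow> u + v = 1 \<Longrightarrow> ideal_plus A B = UNIV"
  using ideal_1[OF ideal_plus_ideal, of A B] ideal_plus_memI[of u A v B] by simp

lemma prod_diff_in_ideal:
  assumes A: "is_ideal A" and h: "\<And>j. j \<in> S \<Longrightarrow> f j - g j \<in> A"
  shows "(\<Prod>j\<in>S. f j) - (\<Prod>j\<in>S. g j) \<in> A"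
proof (cases "finite S")
  case True
  then show ?thesis using h
  proof (induction S rule: finite_induct)
    case empty then show ?case using ideal_0[OF A] by simp
  next
    case (insert x F)
    have e: "(\<Prod>j\<in>insert x F. f j) - (\<Prod>j\<in>insert x F. g j)
      = (f x - g x) * (\<Prod>j\<in>F. f j) + g x * ((\<Prod>j\<in>F. f j) - (\<Prod>j\<in>F. g j))"
      using insert(1,2) by (simp add: algebra_simps)
    show ?case unfolding e
      using insert ideal_add[OF A ideal_multR[OF A] ideal_multL[OF A]] by simp
  qed
next
  case False then show ?thesis using ideal_0[OF A] by simp
qed

lemma Ann_gen_single:
  assumes J: "is_ideal J" "K \<subseteq> J" and cg: "c * g \<in> J"
  shows "c \<in> Ann J (ideal_gen ({g} \<union> K))"
proof -
  let ?W = "{w. c * w \<in> J}"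
  have W: "is_ideal ?W"
  proof (rule is_idealI)
    show "0 \<in> ?W" using ideal_0[OF J(1)] by simp
    fix s t assume "s \<in> ?W" "t \<in> ?W"
    thus "s + t \<in> ?W" using ideal_add[OF J(1)] by (simp add: distrib_left)
  next
    fix s t assume "s \<in> ?W"
    hence "t * (c * s) \<in> J" using ideal_multL[OF J(1)] by blast
    thus "t * s \<in> ?W" by (simp add: mult.left_commute)
  qed
  have "{g} \<union> K \<subseteq> ?W" using cg J ideal_multL[OF J(1)] by auto
  hence "ideal_gen ({g} \<union> K) \<subseteq> ?W" by (rule gen_least[OF W])
  thus ?thesis unfolding Ann_def by blast
qed

lemma Ann_antimono: "A \<subseteq> B \<Longrightarrow> Ann J B \<subseteq> Ann J A"
  unfolding Ann_def by blast

section \<open>Products of ideals modulo K\<close>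

text \<open>As in Defs, an ideal of R = D/K is represented by its preimage in D; taking K = {0}
  gives products of ideals of D itself.\<close>
definition Rprod_set :: "'a::comm_ring_1 set \<Rightarrow> ('i \<Rightarrow> 'a set) \<Rightarrow> 'i set \<Rightarrow> 'a set" where
  "Rprod_set K F A = ideal_gen ({\<Prod>i\<in>A. f i | f. \<forall>i\<in>A. f i \<in> F i} \<union> K)"

lemma Rprod_set_ideal: "is_ideal (Rprod_set K F A)" unfolding Rprod_set_def by (rule gen_ideal)

lemma Rprod_set_K: "K \<subseteq> Rprod_set K F A" unfolding Rprod_set_def using gen_sub by blast

lemma Rprod_set_mem: "(\<And>i. i \<in> A \<Longrightarrow> f i \<in> F i) \<Longrightarrow> (\<Prod>i\<in>A. f i) \<in> Rprod_set K F A"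
  unfolding Rprod_set_def by (rule gen_mem) blast

lemma Rprod_set_mono: "K \<subseteq> K' \<Longrightarrow> (\<And>i. i \<in> A \<Longrightarrow> F i \<subseteq> G i) \<Longrightarrow> Rprod_set K F A \<subseteq> Rprod_set K' G A"
  unfolding Rprod_set_def by (rule gen_mono) blast

lemma Rprod_set_least: "is_ideal C \<Longrightarrow> K \<subseteq> C \<Longrightarrow>
   (\<And>f. (\<And>i. i \<in> A \<Longrightarrow> f i \<in> F i) \<Longrightarrow> (\<Prod>i\<in>A. f i) \<in> C) \<Longrightarrow> Rprod_set K F A \<subseteq> C"
  unfolding Rprod_set_def by (rule gen_least) blast+

lemma Rprod_set_empty: "Rprod_set K F {} = (UNIV::'a::comm_ring_1 set)"
proof -
  have "1 \<in> Rprod_set K F {}" using Rprod_set_mem[of "{}" _ F K] by simp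
  thus ?thesis using ideal_1[OF Rprod_set_ideal] by blast
qed

lemma Rprod_set_sub_factor:
  assumes "finite A" "j \<in> A" "is_ideal (F j)" "K \<subseteq> F j"
  shows "Rprod_set K F A \<subseteq> F j"
proof (rule Rprod_set_least[OF assms(3,4)])
  fix f assume f: "\<And>i. i \<in> A \<Longrightarrow> f i \<in> F i"
  have "(\<Prod>i\<in>A. f i) = f j * (\<Prod>i\<in>A-{j}. f i)"
    using assms by (simp add: prod.remove)
  thus "(\<Prod>i\<in>A. f i) \<in> F j" using f[OF assms(2)] ideal_multR[OF assms(3)] by simp
qed

lemma Rprod_set_reindex:
  assumes "bij_betw h A B"
  shows "Rprod_set K (F \<circ> h) A = Rprod_set K F B"
proof -
  have "{\<Prod>i\<in>A. f i | f. \<forall>i\<in>A. f i \<in> F (h i)} = {\<Prod>i\<in>B. f i | f. \<forall>i\<in>B. f i \<in> F i}"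
  proof safe
    fix f assume f: "\<forall>i\<in>A. f i \<in> F (h i)"
    let ?g = "\<lambda>j. f (inv_into A h j)"
    have "(\<Prod>j\<in>B. ?g j) = (\<Prod>i\<in>A. ?g (h i))"
      using prod.reindex_bij_betw[OF assms, of ?g] by simp
    also have "\<dots> = (\<Prod>i\<in>A. f i)"
      by (rule prod.cong) (simp_all add: bij_betw_inv_into_left[OF assms])
    finally have "(\<Prod>i\<in>A. f i) = (\<Prod>j\<in>B. ?g j)" ..
    moreover have "\<forall>j\<in>B. ?g j \<in> F j"
      using f assms by (metis bij_betw_imp_surj_on bij_betw_inv_into_right inv_into_into)
    ultimately show "\<exists>g. (\<Prod>i\<in>A. f i) = (\<Prod>i\<in>B. g i) \<and> (\<forall>i\<in>B. g i \<in> F i)" by blast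
  next
    fix f assume f: "\<forall>i\<in>B. f i \<in> F i"
    have "(\<Prod>i\<in>B. f i) = (\<Prod>i\<in>A. f (h i))"
      using assms by (simp add: prod.reindex_bij_betw)
    moreover have "\<forall>i\<in>A. f (h i) \<in> F (h i)" using f assms bij_betwE by blast
    ultimately show "\<exists>g. (\<Prod>i\<in>B. f i) = (\<Prod>i\<in>A. g i) \<and> (\<forall>i\<in>A. g i \<in> F (h i))" by blast
  qed
  thus ?thesis unfolding Rprod_set_def by simp
qed

lemma Rprod_set_cong: "(\<And>i. i \<in> A \<Longrightarrow> F i = G i) \<Longrightarrow> Rprod_set K F A = Rprod_set K G A"
  unfolding Rprod_set_def by (rule arg_cong[where f = "\<lambda>S. ideal_gen (S \<union> K)"]) auto

lemma Rprod_gen_left: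
  "Rprod K A (ideal_gen (S \<union> K)) = ideal_gen ({x * s | x s. x \<in> A \<and> s \<in> S} \<union> K)"
proof (rule subset_antisym)
  let ?Z = "ideal_gen ({x * s | x s. x \<in> A \<and> s \<in> S} \<union> K)"
  have Z: "is_ideal ?Z" by (rule gen_ideal)
  show "Rprod K A (ideal_gen (S \<union> K)) \<subseteq> ?Z"
    unfolding Rprod_def
  proof (rule gen_least[OF Z], safe)
    fix x y assume x: "x \<in> A" and y: "y \<in> ideal_gen (S \<union> K)"
    let ?T = "{y. x * y \<in> ?Z}"
    have T: "is_ideal ?T"
    proof (rule is_idealI)
      show "0 \<in> ?T" using ideal_0[OF Z] by simp
      fix u v assume "u \<in> ?T" "v \<in> ?T"
      thus "u + v \<in> ?T" using ideal_add[OF Z, of "x*u" "x*v"] by (simp add: distrib_left)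
    next
      fix u v assume "u \<in> ?T"
      thus "v * u \<in> ?T" using ideal_multL[OF Z, of "x*u" v] by (simp add: mult.left_commute)
    qed
    have "S \<union> K \<subseteq> ?T"
    proof
      fix z assume z: "z \<in> S \<union> K"
      show "z \<in> ?T"
      proof (cases "z \<in> S")
        case True
        hence "x * z \<in> {x * s | x s. x \<in> A \<and> s \<in> S}" using x by blast
        hence "x * z \<in> ?Z" by (intro gen_mem) simp
        thus ?thesis by simp
      next
        case False
        hence "z \<in> K" using z by simp
        hence "z \<in> ?Z" by (intro gen_mem) simp
        thus ?thesis using ideal_multL[OF Z, of z x] by simp
      qed
    qed
    hence "ideal_gen (S \<union> K) \<subseteq> ?T" using gen_least[OF T] by blast
    thus "x * y \<in> ?Z" using y by blast
  next
    fix z assume "z \<in> K" thus "z \<in> ?Z" using gen_sub by blast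
  qed
  show "?Z \<subseteq> Rprod K A (ideal_gen (S \<union> K))"
    unfolding Rprod_def by (rule gen_mono) (use gen_sub in blast)
qed

lemma prodset_comm: "{x * y | x y. x \<in> A \<and> y \<in> B} = {x * y | x y. x \<in> B \<and> (y::'a::comm_ring_1) \<in> A}"
proof safe
  fix a b assume "a \<in> A" "b \<in> B"
  thus "\<exists>x y. a * b = x * y \<and> x \<in> B \<and> y \<in> A" by (intro exI[of _ b] exI[of _ a]) (simp add: mult.commute)
next
  fix a b assume "a \<in> B" "b \<in> A"
  thus "\<exists>x y. a * b = x * y \<and> x \<in> A \<and> y \<in> B" by (intro exI[of _ b] exI[of _ a]) (simp add: mult.commute)
qed

lemma Rprod_comm: "Rprod K A B = Rprod K B A"
  unfolding Rprod_def prodset_comm ..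

lemma Rprod_ideal: "is_ideal (Rprod K A B)" unfolding Rprod_def by (rule gen_ideal)

lemma Rprod_K: "K \<subseteq> Rprod K A B" unfolding Rprod_def using gen_sub by blast

lemma Rprod_mem: "x \<in> A \<Longrightarrow> y \<in> B \<Longrightarrow> x * y \<in> Rprod K A B"
  unfolding Rprod_def by (rule gen_mem) blast

lemma Rprod_mono: "A \<subseteq> A' \<Longrightarrow> B \<subseteq> B' \<Longrightarrow> Rprod K A B \<subseteq> Rprod K A' B'"
  unfolding Rprod_def by (rule gen_mono) blast

lemma Rprod_least: "is_ideal C \<Longrightarrow> K \<subseteq> C \<Longrightarrow> (\<And>x y. x \<in> A \<Longrightarrow> y \<in> B \<Longrightarrow> x * y \<in> C) \<Longrightarrow> Rprod K A B \<subseteq> C"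
  unfolding Rprod_def by (rule gen_least) blast+

lemma Rprod_subR: "is_ideal B \<Longrightarrow> K \<subseteq> B \<Longrightarrow> Rprod K A B \<subseteq> B"
  by (rule Rprod_least) (auto intro: ideal_multL)

lemma Rprod_subL: "is_ideal A \<Longrightarrow> K \<subseteq> A \<Longrightarrow> Rprod K A B \<subseteq> A"
  using Rprod_subR Rprod_comm by metis

lemma gen_K_ideal: "is_ideal B \<Longrightarrow> K \<subseteq> B \<Longrightarrow> ideal_gen (B \<union> K) = B"
  by (simp add: Un_absorb2 gen_idem)

lemma Rprod_assoc_gen: "Rprod K A (Rprod K B C) = ideal_gen ({x * (y * z) | x y z. x \<in> A \<and> y \<in> B \<and> z \<in> C} \<union> K)"
  unfolding Rprod_def[of K B C] Rprod_gen_left by (rule arg_cong[where f = "\<lambda>S. ideal_gen (S \<union> K)"]) blast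

lemma Rprod_assoc: "Rprod K A (Rprod K B C) = Rprod K (Rprod K A B) C"
proof -
  have "Rprod K (Rprod K A B) C = Rprod K C (Rprod K A B)" by (rule Rprod_comm)
  also have "\<dots> = ideal_gen ({x * (y * z) | x y z. x \<in> C \<and> y \<in> A \<and> z \<in> B} \<union> K)"
    by (rule Rprod_assoc_gen)
  also have "\<dots> = ideal_gen ({x * (y * z) | x y z. x \<in> A \<and> y \<in> B \<and> z \<in> C} \<union> K)"
  proof (rule arg_cong[where f = "\<lambda>S. ideal_gen (S \<union> K)"], safe)
    fix a b c assume "a \<in> C" "b \<in> A" "c \<in> B"
    thus "\<exists>x y z. a * (b * c) = x * (y * z) \<and> x \<in> A \<and> y \<in> B \<and> z \<in> C"
      by (intro exI[of _ b] exI[of _ c] exI[of _ a]) (simp add: ac_simps)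
  next
    fix a b c assume "a \<in> A" "b \<in> B" "c \<in> C"
    thus "\<exists>x y z. a * (b * c) = x * (y * z) \<and> x \<in> C \<and> y \<in> A \<and> z \<in> B"
      by (intro exI[of _ c] exI[of _ a] exI[of _ b]) (simp add: ac_simps)
  qed
  finally show ?thesis by (simp add: Rprod_assoc_gen)
qed

lemma Rprod_UNIV: "is_ideal B \<Longrightarrow> K \<subseteq> B \<Longrightarrow> Rprod K UNIV B = B"
  using Rprod_subR[of B K UNIV] Rprod_mem[of 1 UNIV _ B K] by force

lemma Rprod_set_insert:
  assumes "finite A" "i \<notin> A"
  shows "Rprod_set K F (insert i A) = Rprod K (F i) (Rprod_set K F A)"
proof -
  have "Rprod K (F i) (Rprod_set K F A) =
     ideal_gen ({x * s | x s. x \<in> F i \<and> s \<in> {\<Prod>i\<in>A. f i | f. \<forall>i\<in>A. f i \<in> F i}} \<union> K)"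
    unfolding Rprod_set_def by (rule Rprod_gen_left)
  also have "{x * s | x s. x \<in> F i \<and> s \<in> {\<Prod>i\<in>A. f i | f. \<forall>i\<in>A. f i \<in> F i}}
     = {\<Prod>i\<in>insert i A. f i | f. \<forall>i\<in>insert i A. f i \<in> F i}"
  proof safe
    fix x f assume x: "x \<in> F i" and f: "\<forall>i\<in>A. f i \<in> F i"
    have "prod (f(i := x)) A = prod f A" using assms(2) by (intro prod.cong) auto
    hence "x * prod f A = prod (f(i := x)) (insert i A)"
      using assms by (simp add: prod.insert)
    moreover have "\<forall>j\<in>insert i A. (f(i := x)) j \<in> F j" using x f by auto
    ultimately show "\<exists>g. x * prod f A = prod g (insert i A) \<and> (\<forall>j\<in>insert i A. g j \<in> F j)" by blast
  next
    fix f assume f: "\<forall>j\<in>insert i A. f j \<in> F j"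
    have "prod f (insert i A) = f i * prod f A" using assms by simp
    thus "\<exists>x s. prod f (insert i A) = x * s \<and> x \<in> F i \<and> s \<in> {\<Prod>i\<in>A. f i | f. \<forall>i\<in>A. f i \<in> F i}"
      using f by blast
  qed
  finally show ?thesis unfolding Rprod_set_def by simp
qed

lemma Rprod_set_remove:
  assumes "finite A" "i \<in> A"
  shows "Rprod_set K F A = Rprod K (F i) (Rprod_set K F (A - {i}))"
proof -
  have "A = insert i (A - {i})" using assms(2) by blast
  thus ?thesis using Rprod_set_insert[of "A - {i}" i K F] assms(1) by simp
qed

lemma Rprod_set_union:
  assumes "finite A" "finite B" "A \<inter> B = {}"
  shows "Rprod_set K F (A \<union> B) = Rprod K (Rprod_set K F A) (Rprod_set K F B)"
  using assms
proof (induction A rule: finite_induct)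
  case empty
  then show ?case by (simp add: Rprod_set_empty Rprod_UNIV Rprod_set_ideal Rprod_set_K)
next
  case (insert x A)
  have "Rprod_set K F (insert x A \<union> B) = Rprod_set K F (insert x (A \<union> B))" by simp
  also have "\<dots> = Rprod K (F x) (Rprod_set K F (A \<union> B))"
    using insert by (intro Rprod_set_insert) auto
  also have "\<dots> = Rprod K (F x) (Rprod K (Rprod_set K F A) (Rprod_set K F B))"
    using insert by simp
  also have "\<dots> = Rprod K (Rprod_set K F (insert x A)) (Rprod_set K F B)"
    using insert by (simp add: Rprod_assoc Rprod_set_insert)
  finally show ?case .
qed

lemma Rprod_set_zero_gen: "Rprod_set K F A = ideal_gen (Rprod_set {0} F A \<union> K)"
proof -
  have "ideal_gen (Rprod_set {0} F A \<union> K) = ideal_gen (insert 0 ({\<Prod>i\<in>A. f i | f. \<forall>i\<in>A. f i \<in> F i} \<union> K))"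
    unfolding Rprod_set_def[of "{0}"] gen_gen_Un by (rule arg_cong[where f = ideal_gen]) auto
  thus ?thesis unfolding gen_insert0 Rprod_set_def by simp
qed

lemma ideal_prod_Rprod: "ideal_prod A B = Rprod {0} A B"
  unfolding ideal_prod_def Rprod_def by (simp add: gen_insert0)

lemma ideal_pow_eq: "ideal_pow A m = Rprod_set {0} (\<lambda>_. A) {..<m}"
proof (induction m)
  case 0 then show ?case by (simp add: Rprod_set_empty)
next
  case (Suc m)
  have "Rprod_set {0} (\<lambda>_. A) {..<Suc m} = Rprod_set {0} (\<lambda>_. A) (insert m {..<m})"
    by (simp add: lessThan_Suc)
  also have "\<dots> = Rprod {0} A (Rprod_set {0} (\<lambda>_. A) {..<m})" by (rule Rprod_set_insert) auto
  finally show ?case using Suc by (simp add: ideal_prod_Rprod Rprod_comm)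
qed

lemma ideal_Prod_eq: "ideal_Prod F m = Rprod_set {0} F {..<m}"
proof (induction m)
  case 0 then show ?case by (simp add: Rprod_set_empty)
next
  case (Suc m)
  have "Rprod_set {0} F {..<Suc m} = Rprod_set {0} F (insert m {..<m})"
    by (simp add: lessThan_Suc)
  also have "\<dots> = Rprod {0} (F m) (Rprod_set {0} F {..<m})" by (rule Rprod_set_insert) auto
  finally show ?case using Suc by (simp add: ideal_prod_Rprod Rprod_comm)
qed

lemma Rprod_fam_eq: "Rprod_fam K F m = Rprod_set K F {..<m}"
proof (induction m)
  case 0 then show ?case by (simp add: Rprod_set_empty)
next
  case (Suc m)
  have "Rprod_set K F {..<Suc m} = Rprod_set K F (insert m {..<m})"
    by (simp add: lessThan_Suc)
  also have "\<dots> = Rprod K (F m) (Rprod_set K F {..<m})" by (rule Rprod_set_insert) auto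
  finally show ?case using Suc by (simp add: Rprod_comm)
qed

lemma Rprod_set_const_card:
  assumes "finite A"
  shows "Rprod_set K (\<lambda>_. P) A = Rprod_set K (\<lambda>_. P) {..<card A}"
proof -
  obtain h where "bij_betw h {..<card A} A"
    using assms by (metis bij_betw_from_nat_into_finite ex_bij_betw_nat_finite lessThan_atLeast0)
  from Rprod_set_reindex[OF this, of K "\<lambda>_. P"] show ?thesis by (simp add: o_def)
qed

lemma ideal_pow_add: "ideal_pow P (a + b) = Rprod {0} (ideal_pow P a) (ideal_pow P b)"
proof -
  have e: "{..<a+b} = {..<a} \<union> {a..<a+b}" by auto
  have d: "{..<a} \<inter> {a..<a+b} = {}" by auto
  have "Rprod_set {0} (\<lambda>_. P) {..<a+b} = Rprod {0} (Rprod_set {0} (\<lambda>_. P) {..<a}) (Rprod_set {0} (\<lambda>_. P) {a..<a+b})"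
    unfolding e by (rule Rprod_set_union[OF _ _ d]) simp_all
  moreover have "Rprod_set {0} (\<lambda>_. P) {a..<a+b} = Rprod_set {0} (\<lambda>_. P) {..<b}"
    using Rprod_set_const_card[of "{a..<a+b}" "{0}" P] by simp
  ultimately show ?thesis by (simp add: ideal_pow_eq)
qed

lemma ideal_pow_ideal: "is_ideal (ideal_pow P a)" by (simp add: ideal_pow_eq Rprod_set_ideal)

lemma ideal_pow_mono: "is_ideal P \<Longrightarrow> a \<le> b \<Longrightarrow> ideal_pow P b \<subseteq> ideal_pow P a"
  using ideal_pow_add[of P a "b - a"]
  by (metis Rprod_subL ideal_pow_ideal le_add_diff_inverse empty_subsetI insert_subset ideal_0)

lemma ideal_pow_mult: "x \<in> ideal_pow P a \<Longrightarrow> y \<in> ideal_pow P b \<Longrightarrow> x * y \<in> ideal_pow P (a + b)"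
  by (simp add: ideal_pow_add Rprod_mem)

lemma ideal_pow_1: "is_ideal P \<Longrightarrow> ideal_pow P 1 = P"
  by (simp add: ideal_prod_Rprod Rprod_comm Rprod_UNIV ideal_0)

lemma ideal_pow_exact:
  assumes "x \<notin> ideal_pow P e"
  shows "\<exists>t<e. x \<in> ideal_pow P t \<and> x \<notin> ideal_pow P (Suc t)"
  using assms
proof (induction e)
  case 0 then show ?case by simp
next
  case (Suc e)
  then show ?case by (cases "x \<in> ideal_pow P e") (auto intro: less_SucI)
qed

lemma mult_mem_gen_single:
  assumes x: "x \<in> ideal_gen ({u} \<union> K)" and y: "y \<in> ideal_gen ({v} \<union> K)"
  shows "x * y \<in> ideal_gen ({u * v} \<union> (K::'a::comm_ring_1 set))"
proof -
  have "Rprod K (ideal_gen ({u} \<union> K)) (ideal_gen ({v} \<union> K)) \<subseteq> ideal_gen ({u * v} \<union> K)"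
    unfolding Rprod_gen_left
  proof (rule gen_least[OF gen_ideal], safe)
    fix x' assume "x' \<in> ideal_gen ({u} \<union> K)"
    hence "v * x' \<in> Rprod K {v} (ideal_gen ({u} \<union> K))" by (intro Rprod_mem) auto
    also have "\<dots> = ideal_gen ({y * z | y z. y \<in> {v} \<and> z \<in> {u}} \<union> K)" by (rule Rprod_gen_left)
    also have "{y * z | y z. y \<in> {v} \<and> z \<in> {u}} = {u * v}" by (auto simp: mult.commute)
    finally show "x' * v \<in> ideal_gen ({u * v} \<union> K)" by (simp add: mult.commute)
  qed (use gen_sub in blast)
  thus ?thesis using Rprod_mem[OF x y] by blast
qed

lemma prod_mem_gen_single:
  assumes fin: "finite A" and h: "\<forall>i\<in>A. f i \<in> ideal_gen ({g i} \<union> K)"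
  shows "(\<Prod>i\<in>A. f i) \<in> ideal_gen ({\<Prod>i\<in>A. g i} \<union> (K::'a::comm_ring_1 set))"
  using fin h
proof (induction A rule: finite_induct)
  case empty then show ?case by (auto intro: gen_mem)
next
  case (insert x F)
  then show ?case using mult_mem_gen_single[of "f x" "g x" K "prod f F" "prod g F"] by simp
qed

lemma principal_ideal_mult: "Rprod {0} (principal_ideal u) (principal_ideal v) = principal_ideal (u * (v::'a::comm_ring_1))"
proof (rule subset_antisym)
  show "Rprod {0} (principal_ideal u) (principal_ideal v) \<subseteq> principal_ideal (u * v)"
  proof (rule Rprod_least[OF is_ideal_principal_ideal])
    show "{0} \<subseteq> principal_ideal (u * v)" using ideal_0[OF is_ideal_principal_ideal] by blast
    fix x y assume "x \<in> principal_ideal u" "y \<in> principal_ideal v"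
    then obtain d e where "x = u * d" "y = v * e" unfolding principal_ideal_def by blast
    thus "x * y \<in> principal_ideal (u * v)" unfolding principal_ideal_def by (auto intro: exI[of _ "d * e"] simp: ac_simps)
  qed
  show "principal_ideal (u * v) \<subseteq> Rprod {0} (principal_ideal u) (principal_ideal v)"
    by (rule principal_ideal_sub[OF Rprod_ideal Rprod_mem[OF principal_ideal_self principal_ideal_self]])
qed

section \<open>Nonzero primes of a Dedekind domain\<close>

definition cancellable :: "'a::comm_ring_1 set \<Rightarrow> 'a set \<Rightarrow> bool" where
  "cancellable K A \<longleftrightarrow> (\<forall>Y Z. is_ideal Y \<longrightarrow> is_ideal Z \<longrightarrow> K \<subseteq> Y \<longrightarrow> K \<subseteq> Z \<longrightarrow>
      Rprod K A Y \<subseteq> Rprod K A Z \<longrightarrow> Y \<subseteq> Z)"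

definition maximal_ideal :: "'a::comm_ring_1 set \<Rightarrow> bool" where
  "maximal_ideal P \<longleftrightarrow> (\<forall>a. a \<notin> P \<longrightarrow> ideal_plus P (principal_ideal a) = UNIV)"

lemma cancellableD: "cancellable K A \<Longrightarrow> is_ideal Y \<Longrightarrow> is_ideal Z \<Longrightarrow> K \<subseteq> Y \<Longrightarrow> K \<subseteq> Z \<Longrightarrow>
      Rprod K A Y \<subseteq> Rprod K A Z \<Longrightarrow> Y \<subseteq> Z"
  unfolding cancellable_def by blast

lemma cancellable_factor:
  assumes "cancellable K (Rprod K A B)" shows "cancellable K A"
  unfolding cancellable_def
proof (intro allI impI)
  fix Y Z :: "'a set"
  assume Y: "is_ideal Y" and Z: "is_ideal Z" and KY: "K \<subseteq> Y" and KZ: "K \<subseteq> Z"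
    and s: "Rprod K A Y \<subseteq> Rprod K A Z"
  have "Rprod K (Rprod K A B) Y = Rprod K B (Rprod K A Y)"
    by (metis Rprod_assoc Rprod_comm)
  also have "\<dots> \<subseteq> Rprod K B (Rprod K A Z)" by (rule Rprod_mono[OF order_refl s])
  also have "\<dots> = Rprod K (Rprod K A B) Z" by (metis Rprod_assoc Rprod_comm)
  finally show "Y \<subseteq> Z" using cancellableD[OF assms Y Z KY KZ] by blast
qed

lemma cancellable_Rprod_set_factor:
  assumes "finite A" "j \<in> A" "cancellable K (Rprod_set K F A)" shows "cancellable K (F j)"
  using cancellable_factor assms(3) Rprod_set_remove[OF assms(1,2)] by metis

lemma cancellable_prod:
  assumes "cancellable K A" "cancellable K B" shows "cancellable K (Rprod K A B)"
  unfolding cancellable_def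
proof (intro allI impI)
  fix Y Z :: "'a set"
  assume Y: "is_ideal Y" and Z: "is_ideal Z" and KY: "K \<subseteq> Y" and KZ: "K \<subseteq> Z"
    and s: "Rprod K (Rprod K A B) Y \<subseteq> Rprod K (Rprod K A B) Z"
  hence "Rprod K A (Rprod K B Y) \<subseteq> Rprod K A (Rprod K B Z)" by (simp add: Rprod_assoc)
  hence "Rprod K B Y \<subseteq> Rprod K B Z"
    by (rule cancellableD[OF assms(1) Rprod_ideal Rprod_ideal Rprod_K Rprod_K])
  thus "Y \<subseteq> Z" by (rule cancellableD[OF assms(2) Y Z KY KZ])
qed

lemma cancellable_UNIV: "cancellable {0} (UNIV::'a::comm_ring_1 set)"
  unfolding cancellable_def by (simp add: Rprod_UNIV)

lemma cancellable_pow: assumes "cancellable {0} P" shows "cancellable {0} (ideal_pow P n)"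
proof (induction n)
  case 0 then show ?case by (simp add: cancellable_UNIV)
next
  case (Suc n) then show ?case using cancellable_prod[OF Suc assms] by (simp add: ideal_prod_Rprod)
qed

lemma image_mult_ideal: "is_ideal Y \<Longrightarrow> is_ideal ((*) (a::'a::comm_ring_1) ` Y)"
proof (rule is_idealI)
  assume Y: "is_ideal Y"
  show "0 \<in> (*) a ` Y" using ideal_0[OF Y] by (auto intro: image_eqI[of _ _ 0])
  fix x y assume "x \<in> (*) a ` Y" "y \<in> (*) a ` Y"
  then obtain u v where "u \<in> Y" "v \<in> Y" "x = a * u" "y = a * v" by blast
  thus "x + y \<in> (*) a ` Y" using ideal_add[OF Y, of u v] by (auto simp: distrib_left intro: image_eqI[of _ _ "u+v"])
next
  fix x y assume Y: "is_ideal Y" and "x \<in> (*) a ` Y"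
  then obtain u where "u \<in> Y" "x = a * u" by blast
  thus "y * x \<in> (*) a ` Y" using ideal_multL[OF Y, of u y] by (auto simp: mult.left_commute intro: image_eqI[of _ _ "y*u"])
qed

lemma cancellable_principal:
  fixes a :: "'a::idom"
  assumes "a \<noteq> 0" shows "cancellable {0} (principal_ideal a)"
  unfolding cancellable_def
proof (intro allI impI subsetI)
  fix Y Z :: "'a set" and y
  assume Y: "is_ideal Y" and Z: "is_ideal Z" and s: "Rprod {0} (principal_ideal a) Y \<subseteq> Rprod {0} (principal_ideal a) Z"
    and y: "y \<in> Y"
  have "Rprod {0} (principal_ideal a) Z \<subseteq> (*) a ` Z"
  proof (rule Rprod_least[OF image_mult_ideal[OF Z]])
    show "{0} \<subseteq> (*) a ` Z" using ideal_0[OF Z] by (auto intro: image_eqI[of _ _ 0])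
    fix u v assume "u \<in> principal_ideal a" "v \<in> Z"
    then obtain d where "u = a * d" unfolding principal_ideal_def by blast
    thus "u * v \<in> (*) a ` Z" using ideal_multL[OF Z \<open>v \<in> Z\<close>, of d] by (auto simp: mult.assoc intro: image_eqI[of _ _ "d*v"])
  qed
  moreover have "a * y \<in> Rprod {0} (principal_ideal a) Y" using Rprod_mem[OF principal_ideal_self y] by simp
  ultimately obtain z where "z \<in> Z" "a * y = a * z" using s by blast
  thus "y \<in> Z" using assms by simp
qed

lemma cancellable_mod_prime:
  fixes a :: "'a::comm_ring_1"
  assumes P: "prime_ideal P" and a: "a \<notin> P"
  shows "cancellable P (ideal_plus P (principal_ideal a))"
  unfolding cancellable_def
proof (intro allI impI subsetI)
  fix Y Z :: "'a set" and y
  assume Y: "is_ideal Y" and Z: "is_ideal Z" and PY: "P \<subseteq> Y" and PZ: "P \<subseteq> Z"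
    and s: "Rprod P (ideal_plus P (principal_ideal a)) Y \<subseteq> Rprod P (ideal_plus P (principal_ideal a)) Z" and y: "y \<in> Y"
  have Pi: "is_ideal P" using P unfolding prime_ideal_def by blast
  have "Rprod P (ideal_plus P (principal_ideal a)) Z \<subseteq> ideal_plus P ((*) a ` Z)"
  proof (rule Rprod_least[OF ideal_plus_ideal[OF Pi image_mult_ideal[OF Z]]])
    show "P \<subseteq> ideal_plus P ((*) a ` Z)" by (rule ideal_plus_subL[OF image_mult_ideal[OF Z]])
    fix u v assume "u \<in> ideal_plus P (principal_ideal a)" "v \<in> Z"
    then obtain p d where pd: "p \<in> P" "u = p + a * d" unfolding ideal_plus_def principal_ideal_def by blast
    have "u * v = p * v + a * (d * v)" using pd by (simp add: algebra_simps)
    moreover have "p * v \<in> P" by (rule ideal_multR[OF Pi pd(1)])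
    moreover have "a * (d * v) \<in> (*) a ` Z" using ideal_multL[OF Z \<open>v \<in> Z\<close>, of d] by blast
    ultimately show "u * v \<in> ideal_plus P ((*) a ` Z)" unfolding ideal_plus_def by blast
  qed
  moreover have "a \<in> ideal_plus P (principal_ideal a)" using ideal_plus_memI[OF ideal_0[OF Pi] principal_ideal_self, of a] by simp
  hence "a * y \<in> Rprod P (ideal_plus P (principal_ideal a)) Y" using Rprod_mem[OF _ y] by blast
  ultimately obtain p z where pz: "p \<in> P" "z \<in> Z" "a * y = p + a * z" using s unfolding ideal_plus_def by blast
  hence "a * (y - z) \<in> P" by (simp add: algebra_simps)
  hence "y - z \<in> P" using P a unfolding prime_ideal_def by blast
  hence "y - z \<in> Z" using PZ by blast
  thus "y \<in> Z" using ideal_diff_mem[OF Z _ pz(2)] by blast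
qed

lemma prime_idealD: "prime_ideal P \<Longrightarrow> is_ideal P" "prime_ideal P \<Longrightarrow> P \<noteq> UNIV"
  "prime_ideal P \<Longrightarrow> x * y \<in> P \<Longrightarrow> x \<in> P \<or> y \<in> P"
  unfolding prime_ideal_def by blast+

lemma prime_prod:
  assumes "prime_ideal P" "finite B" "(\<Prod>j\<in>B. f j) \<in> P"
  shows "\<exists>j\<in>B. f j \<in> P"
  using assms(2,3)
proof (induction B rule: finite_induct)
  case empty
  then show ?case using assms(1) ideal_1 prime_idealD by fastforce
next
  case (insert x F)
  then show ?case using prime_idealD(3)[OF assms(1), of "f x" "prod f F"] by auto
qed

lemma prime_sub_Rprod_set:
  assumes "prime_ideal P" "finite B" "Rprod_set K G B \<subseteq> P"
  shows "\<exists>j\<in>B. G j \<subseteq> P"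
proof (rule ccontr)
  assume "\<not> ?thesis"
  hence "\<forall>j\<in>B. \<exists>g. g \<in> G j \<and> g \<notin> P" by blast
  then obtain f where f: "\<forall>j\<in>B. f j \<in> G j \<and> f j \<notin> P" by metis
  have "(\<Prod>j\<in>B. f j) \<in> Rprod_set K G B" by (rule Rprod_set_mem) (use f in blast)
  hence "(\<Prod>j\<in>B. f j) \<in> P" using assms(3) by blast
  thus False using prime_prod[OF assms(1,2)] f by blast
qed

lemma prime_factorisations_common_factor:
  fixes F :: "'i \<Rightarrow> 'a::comm_ring_1 set" and G :: "'j \<Rightarrow> 'a set"
  assumes fin: "finite A" "finite B" "A \<noteq> {}"
    and hF: "\<forall>i\<in>A. prime_ideal (F i) \<and> K \<subseteq> F i" and hG: "\<forall>j\<in>B. prime_ideal (G j) \<and> K \<subseteq> G j"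
    and eq: "Rprod_set K F A = Rprod_set K G B"
  shows "\<exists>i\<in>A. \<exists>j\<in>B. G j = F i"
proof -
  obtain M where M: "M \<in> F ` A" "\<forall>b\<in>F ` A. b \<subseteq> M \<longrightarrow> M = b"
    using finite_has_minimal[of "F ` A"] fin by blast
  then obtain i0 where i0: "i0 \<in> A" "F i0 = M" by blast
  have "Rprod_set K G B \<subseteq> F i0"
    using Rprod_set_sub_factor[OF fin(1) i0(1)] hF i0(1) prime_idealD(1) eq by metis
  then obtain j0 where j0: "j0 \<in> B" "G j0 \<subseteq> F i0"
    using prime_sub_Rprod_set[OF _ fin(2)] hF i0(1) by blast
  have "Rprod_set K F A \<subseteq> G j0"
    using Rprod_set_sub_factor[OF fin(2) j0(1)] hG j0(1) prime_idealD(1) eq by metis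
  then obtain i1 where i1: "i1 \<in> A" "F i1 \<subseteq> G j0"
    using prime_sub_Rprod_set[OF _ fin(1)] hG j0(1) by blast
  have "F i1 = F i0" using M i0 i1 j0 by blast
  thus ?thesis using i0(1) i1 j0 by blast
qed

lemma prime_factorisation_unique:
  fixes F :: "'i \<Rightarrow> 'a::comm_ring_1 set" and G :: "'j \<Rightarrow> 'a set"
  assumes fin: "finite A" "finite B"
    and hF: "\<forall>i\<in>A. prime_ideal (F i) \<and> K \<subseteq> F i \<and> cancellable K (F i)"
    and hG: "\<forall>j\<in>B. prime_ideal (G j) \<and> K \<subseteq> G j"
    and eq: "Rprod_set K F A = Rprod_set K G B"
  shows "Rprod_set {0} F A = Rprod_set {0} G B"
  using fin hF hG eq
proof (induction "card A" arbitrary: A B rule: less_induct)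
  case less
  show ?case
  proof (cases "A = {}")
    case True
    have "B = {}"
    proof (rule ccontr)
      assume "B \<noteq> {}" then obtain j where j: "j \<in> B" by blast
      have "Rprod_set K G B \<subseteq> G j"
        using Rprod_set_sub_factor[OF less.prems(2) j] less.prems(4) j prime_idealD(1) by blast
      hence "G j = UNIV" using less.prems(5) True by (auto simp: Rprod_set_empty)
      thus False using less.prems(4) j prime_idealD(2) by blast
    qed
    thus ?thesis using True by (simp add: Rprod_set_empty)
  next
    case False
    then obtain i0 j0 where ij: "i0 \<in> A" "j0 \<in> B" "G j0 = F i0"
      using prime_factorisations_common_factor[OF less.prems(1,2) False _ _ less.prems(5)] less.prems(3,4)
      by blast
    have c: "cancellable K (F i0)" using less.prems(3) ij(1) by blast
    have "Rprod K (F i0) (Rprod_set K F (A - {i0})) = Rprod K (F i0) (Rprod_set K G (B - {j0}))"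
      using less.prems(5) Rprod_set_remove[OF less.prems(1) ij(1), of K F]
        Rprod_set_remove[OF less.prems(2) ij(2), of K G] ij(3) by simp
    hence "Rprod_set K F (A - {i0}) = Rprod_set K G (B - {j0})"
      using cancellableD[OF c Rprod_set_ideal Rprod_set_ideal Rprod_set_K Rprod_set_K] by (metis subset_antisym order_refl)
    moreover have "card (A - {i0}) < card A" using ij(1) less.prems(1) by (meson card_Diff1_less)
    ultimately have "Rprod_set {0} F (A - {i0}) = Rprod_set {0} G (B - {j0})"
      using less.hyps[of "A - {i0}" "B - {j0}"] less.prems by auto
    thus ?thesis
      using Rprod_set_remove[OF less.prems(1) ij(1), of "{0}" F]
        Rprod_set_remove[OF less.prems(2) ij(2), of "{0}" G] ij(3) by simp
  qed
qed

lemma dedekind_factorisation: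
  assumes "dedekind_domain TYPE('a::idom)" "is_ideal (A::'a set)" "A \<noteq> {0}" "A \<noteq> UNIV"
  shows "\<exists>(m::nat) G. (\<forall>l<m. prime_ideal (G l)) \<and> A = Rprod_set {0} G {..<m}"
proof -
  have "\<exists>m Q. m \<ge> 1 \<and> (\<forall>l<m. prime_ideal (Q l)) \<and> A = ideal_Prod Q m"
    using assms(1) assms(2-4) unfolding dedekind_domain_def by simp
  then obtain m Q where "(\<forall>l<m. prime_ideal (Q l))" "A = ideal_Prod Q m" by blast
  thus ?thesis unfolding ideal_Prod_eq by blast
qed

lemma maximal_ideal_eq: "maximal_ideal Q \<Longrightarrow> is_ideal M \<Longrightarrow> Q \<subseteq> M \<Longrightarrow> M \<noteq> UNIV \<Longrightarrow> M = Q"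
proof (rule ccontr)
  assume mQ: "maximal_ideal Q" and M: "is_ideal M" "Q \<subseteq> M" "M \<noteq> UNIV" and ne: "M \<noteq> Q"
  then obtain x where x: "x \<in> M" "x \<notin> Q" by blast
  hence "ideal_plus Q (principal_ideal x) = UNIV" using mQ unfolding maximal_ideal_def by blast
  moreover have "ideal_plus Q (principal_ideal x) \<subseteq> M" using ideal_plus_least[OF M(1) M(2) principal_ideal_sub[OF M(1) x(1)]] .
  ultimately show False using M(3) by blast
qed

lemma Rprod_mod_square_plus_principal:
  fixes a :: "'a::comm_ring_1"
  assumes Pi: "is_ideal P"
  shows "Rprod P (ideal_plus P (principal_ideal a)) (ideal_plus P (principal_ideal a)) = ideal_plus P (principal_ideal (a * a))"
proof (rule subset_antisym)
  show "Rprod P (ideal_plus P (principal_ideal a)) (ideal_plus P (principal_ideal a)) \<subseteq> ideal_plus P (principal_ideal (a * a))"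
  proof (rule Rprod_least[OF ideal_plus_ideal[OF Pi is_ideal_principal_ideal] ideal_plus_subL[OF is_ideal_principal_ideal]])
    fix u v assume "u \<in> ideal_plus P (principal_ideal a)" "v \<in> ideal_plus P (principal_ideal a)"
    then obtain p d p' d' where pd: "p \<in> P" "u = p + a * d" "p' \<in> P" "v = p' + a * d'"
      unfolding ideal_plus_def principal_ideal_def by blast
    have "u * v = (p * v + (a * d) * p') + (a * a) * (d * d')" using pd by (simp add: algebra_simps)
    moreover have "p * v + (a * d) * p' \<in> P"
      using ideal_add[OF Pi ideal_multR[OF Pi pd(1)] ideal_multL[OF Pi pd(3)]] by blast
    ultimately show "u * v \<in> ideal_plus P (principal_ideal (a * a))" unfolding ideal_plus_def principal_ideal_def by blast
  qed
  show "ideal_plus P (principal_ideal (a * a)) \<subseteq> Rprod P (ideal_plus P (principal_ideal a)) (ideal_plus P (principal_ideal a))"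
  proof
    fix z assume "z \<in> ideal_plus P (principal_ideal (a * a))"
    then obtain p d where pd: "p \<in> P" "z = p + a * (a * d)" unfolding ideal_plus_def principal_ideal_def by (auto simp: mult.assoc)
    have a1: "a \<in> ideal_plus P (principal_ideal a)" using ideal_plus_memI[OF ideal_0[OF Pi] principal_ideal_self, of a] by simp
    have a2: "a * d \<in> ideal_plus P (principal_ideal a)" using ideal_plus_memI[OF ideal_0[OF Pi] principal_ideal_mem, of a d] by simp
    have "a * (a * d) \<in> Rprod P (ideal_plus P (principal_ideal a)) (ideal_plus P (principal_ideal a))" by (rule Rprod_mem[OF a1 a2])
    moreover have "p \<in> Rprod P (ideal_plus P (principal_ideal a)) (ideal_plus P (principal_ideal a))" using Rprod_K pd(1) by blast
    ultimately show "z \<in> Rprod P (ideal_plus P (principal_ideal a)) (ideal_plus P (principal_ideal a))"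
      using ideal_add[OF Rprod_ideal] pd(2) by (metis add.commute)
  qed
qed

lemma Rprod_set_double:
  fixes G :: "nat \<Rightarrow> 'a::comm_ring_1 set"
  shows "Rprod_set K (case_sum G G) (Inl ` {..<m} \<union> Inr ` {..<m}) = Rprod K (Rprod_set K G {..<m}) (Rprod_set K G {..<m})"
proof -
  have "Rprod_set K (case_sum G G) (Inl ` {..<m} \<union> Inr ` {..<m}) =
     Rprod K (Rprod_set K (case_sum G G) (Inl ` {..<m})) (Rprod_set K (case_sum G G) (Inr ` {..<m}))"
    by (rule Rprod_set_union) auto
  moreover have "Rprod_set K (case_sum G G \<circ> Inl) {..<m} = Rprod_set K (case_sum G G) (Inl ` {..<m})"
    by (rule Rprod_set_reindex) (simp add: bij_betw_imageI)
  moreover have "Rprod_set K (case_sum G G \<circ> Inr) {..<m} = Rprod_set K (case_sum G G) (Inr ` {..<m})"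
    by (rule Rprod_set_reindex) (simp add: bij_betw_imageI)
  moreover have "case_sum G G \<circ> Inl = G" "case_sum G G \<circ> Inr = G" by auto
  ultimately show ?thesis by simp
qed

lemma square_plus_principal:
  fixes P :: "'a::idom set"
  assumes dd: "dedekind_domain TYPE('a)" and P: "prime_ideal P" and a: "a \<notin> P"
    and XU: "ideal_plus P (principal_ideal a) \<noteq> UNIV"
  shows "Rprod {0} (ideal_plus P (principal_ideal a)) (ideal_plus P (principal_ideal a)) = ideal_plus P (principal_ideal (a * a))"
proof -
  have Pi: "is_ideal P" using P prime_idealD by blast
  let ?X = "ideal_plus P (principal_ideal a)" and ?X2 = "ideal_plus P (principal_ideal (a * a))"
  have Xi: "is_ideal ?X" and X2i: "is_ideal ?X2" using ideal_plus_ideal[OF Pi is_ideal_principal_ideal] by blast+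
  have PX: "P \<subseteq> ?X" and PX2: "P \<subseteq> ?X2" using ideal_plus_subL[OF is_ideal_principal_ideal] by blast+
  have a0: "a \<noteq> 0" using a ideal_0[OF Pi] by blast
  have "a \<in> ?X" "a * a \<in> ?X2" by (rule subsetD[OF ideal_plus_subR[OF Pi] principal_ideal_self])+
  hence X0: "?X \<noteq> {0}" "?X2 \<noteq> {0}" using a0 by force+
  have "?X2 \<subseteq> ?X" by (rule ideal_plus_mono) (auto simp: principal_ideal_def mult.assoc)
  hence X2U: "?X2 \<noteq> UNIV" using XU by blast
  obtain m1 :: nat and G1 where G1: "\<forall>l<m1. prime_ideal (G1 l)" "?X = Rprod_set {0} G1 {..<m1}"
    using dedekind_factorisation[OF dd Xi X0(1) XU] by blast
  obtain m2 :: nat and G2 where G2: "\<forall>l<m2. prime_ideal (G2 l)" "?X2 = Rprod_set {0} G2 {..<m2}"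
    using dedekind_factorisation[OF dd X2i X0(2) X2U] by blast
  have XG1: "?X \<subseteq> G1 l" if "l < m1" for l
    using Rprod_set_sub_factor[of "{..<m1}" l G1 "{0}"] that G1 prime_idealD(1) ideal_0 by blast
  have XG2: "?X2 \<subseteq> G2 l" if "l < m2" for l
    using Rprod_set_sub_factor[of "{..<m2}" l G2 "{0}"] that G2 prime_idealD(1) ideal_0 by blast
  have pP1: "Rprod_set P G1 {..<m1} = ?X" using G1(2) Rprod_set_zero_gen gen_K_ideal[OF Xi PX] by metis
  have pP2: "Rprod_set P G2 {..<m2} = ?X2" using G2(2) Rprod_set_zero_gen gen_K_ideal[OF X2i PX2] by metis
  have cG1: "cancellable P (G1 l)" if "l < m1" for l
    using cancellable_Rprod_set_factor[of "{..<m1}" l P G1] that cancellable_mod_prime[OF P a] pP1 by simp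
  let ?F = "case_sum G1 G1" and ?A = "Inl ` {..<m1} \<union> Inr ` {..<m1}"
  have hF: "\<forall>i\<in>?A. prime_ideal (?F i) \<and> P \<subseteq> ?F i \<and> cancellable P (?F i)"
  proof
    fix i assume "i \<in> ?A"
    then obtain l where l: "l < m1" "i = Inl l \<or> i = Inr l" by blast
    hence "?F i = G1 l" by auto
    thus "prime_ideal (?F i) \<and> P \<subseteq> ?F i \<and> cancellable P (?F i)"
      using G1(1) XG1[OF l(1)] PX cG1[OF l(1)] l(1) by auto
  qed
  have hG: "\<forall>j\<in>{..<m2}. prime_ideal (G2 j) \<and> P \<subseteq> G2 j" using G2(1) XG2 PX2 by (meson lessThan_iff order_trans)
  have "Rprod_set P ?F ?A = Rprod_set P G2 {..<m2}"
    unfolding Rprod_set_double pP1 pP2 by (rule Rprod_mod_square_plus_principal[OF Pi])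
  hence "Rprod_set {0} ?F ?A = Rprod_set {0} G2 {..<m2}"
    by (intro prime_factorisation_unique[OF _ _ hF hG]) auto
  thus ?thesis unfolding Rprod_set_double G1(2)[symmetric] G2(2)[symmetric] .
qed

lemma Rprod_square_plus_principal_sub:
  assumes Pi: "is_ideal P"
  shows "Rprod {0} (ideal_plus P (principal_ideal a)) (ideal_plus P (principal_ideal a))
    \<subseteq> ideal_plus (Rprod {0} P (ideal_plus P (principal_ideal a))) (principal_ideal (a * a))"
    (is "Rprod {0} ?X ?X \<subseteq> _")
proof (rule Rprod_least[OF ideal_plus_ideal[OF Rprod_ideal is_ideal_principal_ideal]])
  show "{0} \<subseteq> ideal_plus (Rprod {0} P ?X) (principal_ideal (a * a))"
    using ideal_plus_memI[OF ideal_0[OF Rprod_ideal] ideal_0[OF is_ideal_principal_ideal]] by force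
  fix u v assume "u \<in> ?X" "v \<in> ?X"
  then obtain p d p' d' where pd: "p \<in> P" "u = p + a * d" "p' \<in> P" "v = p' + a * d'"
    unfolding ideal_plus_def principal_ideal_def by blast
  have "u * v = (p * v + p' * (a * d)) + (a * a) * (d * d')" using pd by (simp add: algebra_simps)
  moreover have "p * v \<in> Rprod {0} P ?X" using Rprod_mem pd(1) \<open>v \<in> ?X\<close> by blast
  moreover have "a * d \<in> ?X" using ideal_plus_memI[OF ideal_0[OF Pi] principal_ideal_mem, of a d] by simp
  hence "p' * (a * d) \<in> Rprod {0} P ?X" using Rprod_mem pd(3) by blast
  ultimately show "u * v \<in> ideal_plus (Rprod {0} P ?X) (principal_ideal (a * a))"
    using ideal_add[OF Rprod_ideal] unfolding ideal_plus_def principal_ideal_def by blast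
qed

lemma prime_sub_Rprod_plus_principal:
  assumes P: "prime_ideal P" and a: "a \<notin> P"
    and sq: "Rprod {0} (ideal_plus P (principal_ideal a)) (ideal_plus P (principal_ideal a)) = ideal_plus P (principal_ideal (a * a))"
  shows "P \<subseteq> Rprod {0} P (ideal_plus P (principal_ideal a))" (is "_ \<subseteq> Rprod {0} P ?X")
proof
  fix z assume z: "z \<in> P"
  have Pi: "is_ideal P" using P prime_idealD by blast
  have "z \<in> ideal_plus P (principal_ideal (a * a))" using z ideal_plus_subL[OF is_ideal_principal_ideal] by blast
  hence "z \<in> ideal_plus (Rprod {0} P ?X) (principal_ideal (a * a))"
    using sq Rprod_square_plus_principal_sub[OF Pi] by blast
  then obtain u d where ud: "u \<in> Rprod {0} P ?X" "z = u + (a * a) * d" unfolding ideal_plus_def principal_ideal_def by blast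
  have "u \<in> P" using ud(1) Rprod_subL[OF Pi] ideal_0[OF Pi] by blast
  hence "a * (a * d) \<in> P" using ideal_diff[OF Pi z \<open>u \<in> P\<close>] ud(2) by (simp add: mult.assoc)
  hence "a * d \<in> P" using prime_idealD(3)[OF P] a by blast
  moreover have "a \<in> ?X" using ideal_plus_memI[OF ideal_0[OF Pi] principal_ideal_self, of a] by simp
  ultimately have "(a * d) * a \<in> Rprod {0} P ?X" by (rule Rprod_mem)
  hence "(a * a) * d \<in> Rprod {0} P ?X" by (simp add: ac_simps)
  thus "z \<in> Rprod {0} P ?X" using ideal_add[OF Rprod_ideal ud(1)] ud(2) by blast
qed

text \<open>Cancelling P from P \<subseteq> P (P + (a)) gives P + (a) = R; the square identity making this
  inclusion available comes from unique factorisation modulo P.\<close>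
lemma cancellable_prime_maximal:
  fixes P :: "'a::idom set"
  assumes dd: "dedekind_domain TYPE('a)" and P: "prime_ideal P" and cP: "cancellable {0} P"
  shows "maximal_ideal P"
  unfolding maximal_ideal_def
proof (intro allI impI)
  fix a assume a: "a \<notin> P"
  have Pi: "is_ideal P" using P prime_idealD by blast
  let ?X = "ideal_plus P (principal_ideal a)"
  have Xi: "is_ideal ?X" by (rule ideal_plus_ideal[OF Pi is_ideal_principal_ideal])
  show "?X = UNIV"
  proof (rule ccontr)
    assume "?X \<noteq> UNIV"
    hence "P \<subseteq> Rprod {0} P ?X"
      by (intro prime_sub_Rprod_plus_principal[OF P a] square_plus_principal[OF dd P a])
    hence "Rprod {0} P UNIV \<subseteq> Rprod {0} P ?X" using Rprod_subL[OF Pi] ideal_0[OF Pi] by blast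
    hence "UNIV \<subseteq> ?X" using cancellableD[OF cP ideal_UNIV Xi] ideal_0[OF Xi] by blast
    thus False using \<open>?X \<noteq> UNIV\<close> by blast
  qed
qed

lemma nonzero_prime_cancellable_maximal:
  fixes P :: "'a::idom set"
  assumes dd: "dedekind_domain TYPE('a)" and P: "prime_ideal P" "P \<noteq> {0}"
  shows "cancellable {0} P \<and> maximal_ideal P"
proof -
  have Pi: "is_ideal P" using P prime_idealD by blast
  obtain a where a: "a \<in> P" "a \<noteq> 0" using P(2) ideal_0[OF Pi] by blast
  have aP: "principal_ideal a \<subseteq> P" by (rule principal_ideal_sub[OF Pi a(1)])
  have aU: "principal_ideal a \<noteq> UNIV" using aP prime_idealD(2)[OF P(1)] by blast
  have a0: "principal_ideal a \<noteq> {0}" using principal_ideal_self[of a] a(2) by blast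
  obtain m :: nat and G where G: "\<forall>l<m. prime_ideal (G l)" "principal_ideal a = Rprod_set {0} G {..<m}"
    using dedekind_factorisation[OF dd is_ideal_principal_ideal a0 aU] by blast
  have cG: "cancellable {0} (G l)" if "l < m" for l
    using cancellable_Rprod_set_factor[of "{..<m}" l "{0}" G] that cancellable_principal[OF a(2)] G(2) by simp
  have mG: "maximal_ideal (G l)" if "l < m" for l
    by (rule cancellable_prime_maximal[OF dd G(1)[rule_format, OF that] cG[OF that]])
  obtain j where j: "j < m" "G j \<subseteq> P" using prime_sub_Rprod_set[OF P(1), of "{..<m}" "{0}" G] G(2) aP by auto
  have "P = G j" using maximal_ideal_eq[OF mG[OF j(1)] Pi j(2) prime_idealD(2)[OF P(1)]] .
  thus ?thesis using cG mG j by simp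
qed

section \<open>Comaximal ideals\<close>

lemma comaximal_prod:
  assumes A: "is_ideal A" and B: "is_ideal B" and C: "is_ideal C"
    and AB: "ideal_plus A B = UNIV" and AC: "ideal_plus A C = UNIV"
  shows "ideal_plus A (Rprod K B C) = UNIV"
proof -
  obtain u v where uv: "u \<in> A" "v \<in> B" "u + v = 1" using ideal_plus_UNIV_D[OF AB] by blast
  obtain u' w where uw: "u' \<in> A" "w \<in> C" "u' + w = 1" using ideal_plus_UNIV_D[OF AC] by blast
  have "1 = (u + v) * (u' + w)" using uv uw by simp
  also have "\<dots> = (u * (u' + w) + v * u') + v * w" by (simp add: algebra_simps)
  finally have e: "1 = (u * (u' + w) + v * u') + v * w" .
  have "u * (u' + w) + v * u' \<in> A" using ideal_add[OF A ideal_multR[OF A uv(1)] ideal_multL[OF A uw(1)]] by blast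
  moreover have "v * w \<in> Rprod K B C" by (rule Rprod_mem[OF uv(2) uw(2)])
  ultimately show ?thesis using ideal_plus_UNIV_I[OF A Rprod_ideal] e by metis
qed

lemma comaximal_pow:
  assumes A: "is_ideal A" and B: "is_ideal B" and AB: "ideal_plus A B = UNIV"
  shows "ideal_plus A (ideal_pow B n) = UNIV"
proof (induction n)
  case 0
  then show ?case using ideal_plus_UNIV_I[OF A ideal_UNIV ideal_0[OF A], of 1] by simp
next
  case (Suc n)
  then show ?case using comaximal_prod[OF A ideal_pow_ideal B Suc AB, of "{0}"] by (simp add: ideal_prod_Rprod)
qed

lemma comaximal_Rprod_set:
  assumes A: "is_ideal A" and fin: "finite S" and h: "\<forall>j\<in>S. is_ideal (G j) \<and> ideal_plus A (G j) = UNIV"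
  shows "ideal_plus A (Rprod_set K G S) = UNIV"
  using fin h
proof (induction S rule: finite_induct)
  case empty
  then show ?case using ideal_plus_UNIV_I[OF A ideal_UNIV ideal_0[OF A], of 1] by (simp add: Rprod_set_empty)
next
  case (insert x F)
  then show ?case using comaximal_prod[OF A _ Rprod_set_ideal, of "G x" K G F] by (simp add: Rprod_set_insert)
qed

lemma comaximal_sym: "ideal_plus A B = UNIV \<Longrightarrow> ideal_plus B A = UNIV" by (simp add: ideal_plus_comm)

lemma ideal_plus_Rprod_comaximal:
  assumes A: "is_ideal A" and B: "is_ideal B" and C: "is_ideal C" and BC: "ideal_plus B C = UNIV"
    and x1: "x \<in> ideal_plus A B" and x2: "x \<in> ideal_plus A C"
  shows "x \<in> ideal_plus A (Rprod {0} B C)"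
proof -
  obtain q0 b0 where qb: "q0 \<in> B" "b0 \<in> C" "q0 + b0 = 1" using ideal_plus_UNIV_D[OF BC] by blast
  obtain a1 b1 where ab1: "a1 \<in> A" "b1 \<in> B" "x = a1 + b1" using x1 unfolding ideal_plus_def by blast
  obtain a2 c2 where ac2: "a2 \<in> A" "c2 \<in> C" "x = a2 + c2" using x2 unfolding ideal_plus_def by blast
  have "x = x * q0 + x * b0" using qb(3) by (metis distrib_left mult.right_neutral)
  also have "x * q0 = a2 * q0 + q0 * c2" using ac2(3) by (simp add: algebra_simps)
  also have "x * b0 = a1 * b0 + b1 * b0" using ab1(3) by (simp add: algebra_simps)
  also have "a2 * q0 + q0 * c2 + (a1 * b0 + b1 * b0) = (a2 * q0 + a1 * b0) + (q0 * c2 + b1 * b0)"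
    by (simp add: algebra_simps)
  finally have e: "x = (a2 * q0 + a1 * b0) + (q0 * c2 + b1 * b0)" .
  have "a2 * q0 + a1 * b0 \<in> A" using ideal_add[OF A ideal_multR[OF A ac2(1)] ideal_multR[OF A ab1(1)]] .
  moreover have "q0 * c2 + b1 * b0 \<in> Rprod {0} B C"
    using ideal_add[OF Rprod_ideal Rprod_mem[OF qb(1) ac2(2)] Rprod_mem[OF ab1(2) qb(2)]] .
  ultimately show ?thesis using e ideal_plus_memI by metis
qed

section \<open>Valuation at a nonzero prime\<close>

lemma principal_ideal_split_prime:
  fixes P :: "'a::idom set"
  assumes dd: "dedekind_domain TYPE('a)" and P: "prime_ideal P" "P \<noteq> {0}" and x0: "x \<noteq> 0"
  shows "\<exists>c C. is_ideal C \<and> principal_ideal x = Rprod {0} (ideal_pow P c) C \<and> ideal_plus C P = UNIV"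
proof (cases "principal_ideal x = UNIV")
  case True
  have Pi: "is_ideal P" using P prime_idealD by blast
  have "ideal_plus UNIV P = UNIV" using ideal_plus_UNIV_I[OF ideal_UNIV Pi _ ideal_0[OF Pi], of 1] by simp
  thus ?thesis using True by (intro exI[of _ 0] exI[of _ UNIV]) (simp add: Rprod_UNIV ideal_UNIV)
next
  case False
  have Pi: "is_ideal P" using P prime_idealD by blast
  have x0': "principal_ideal x \<noteq> {0}" using principal_ideal_self[of x] x0 by blast
  obtain m :: nat and G where G: "\<forall>l<m. prime_ideal (G l)" "principal_ideal x = Rprod_set {0} G {..<m}"
    using dedekind_factorisation[OF dd is_ideal_principal_ideal x0' False] by blast
  have xG: "principal_ideal x \<subseteq> G l" if "l < m" for l
    using Rprod_set_sub_factor[of "{..<m}" l G "{0}"] that G prime_idealD(1) ideal_0 by blast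
  have mG: "maximal_ideal (G l)" if "l < m" for l
  proof -
    have "G l \<noteq> {0}" using xG[OF that] principal_ideal_self[of x] x0 by blast
    thus ?thesis using nonzero_prime_cancellable_maximal[OF dd G(1)[rule_format, OF that]] by blast
  qed
  define A1 where "A1 = {l. l < m \<and> G l = P}"
  define A2 where "A2 = {l. l < m \<and> G l \<noteq> P}"
  have fin: "finite A1" "finite A2" unfolding A1_def A2_def by auto
  have "{..<m} = A1 \<union> A2" "A1 \<inter> A2 = {}" unfolding A1_def A2_def by auto
  hence split: "principal_ideal x = Rprod {0} (Rprod_set {0} G A1) (Rprod_set {0} G A2)"
    using G(2) Rprod_set_union[OF fin] by simp
  have "Rprod_set {0} G A1 = Rprod_set {0} (\<lambda>_. P) A1" by (rule Rprod_set_cong) (simp add: A1_def)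
  also have "\<dots> = ideal_pow P (card A1)" by (simp add: Rprod_set_const_card[OF fin(1)] ideal_pow_eq)
  finally have A1p: "Rprod_set {0} G A1 = ideal_pow P (card A1)" .
  define C where "C = Rprod_set {0} G A2"
  have Ci: "is_ideal C" unfolding C_def by (rule Rprod_set_ideal)
  have "\<not> C \<subseteq> P"
  proof
    assume "C \<subseteq> P"
    then obtain j where j: "j \<in> A2" "G j \<subseteq> P" using prime_sub_Rprod_set[OF P(1) fin(2)] C_def by blast
    hence "P = G j" using maximal_ideal_eq[OF mG Pi j(2) prime_idealD(2)[OF P(1)]] A2_def by blast
    thus False using j A2_def by blast
  qed
  then obtain c where c: "c \<in> C" "c \<notin> P" by blast
  have "ideal_plus P (principal_ideal c) = UNIV"
    using nonzero_prime_cancellable_maximal[OF dd P] c(2) unfolding maximal_ideal_def by blast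
  moreover have "ideal_plus P (principal_ideal c) \<subseteq> ideal_plus C P"
    by (subst ideal_plus_comm, rule ideal_plus_mono[OF principal_ideal_sub[OF Ci c(1)] order_refl])
  ultimately have "ideal_plus C P = UNIV" by blast
  moreover have "principal_ideal x = Rprod {0} (ideal_pow P (card A1)) C" using split A1p C_def by simp
  ultimately show ?thesis using Ci by blast
qed

lemma prime_power_exponent_unique:
  fixes P :: "'a::idom set"
  assumes cP: "cancellable {0} P" and P: "prime_ideal P"
    and x: "x \<in> ideal_pow P a" "x \<notin> ideal_pow P (Suc a)"
    and C: "is_ideal C" "ideal_plus C P = UNIV" and xeq: "principal_ideal x = Rprod {0} (ideal_pow P c) C"
  shows "c = a"
proof (rule ccontr)
  have Pi: "is_ideal P" using P prime_idealD by blast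
  assume "c \<noteq> a"
  hence "Suc a \<le> c \<or> c < a" by auto
  thus False
  proof
    assume "Suc a \<le> c"
    hence "principal_ideal x \<subseteq> ideal_pow P (Suc a)"
      using xeq Rprod_subL[OF ideal_pow_ideal] ideal_pow_mono[OF Pi] ideal_0[OF ideal_pow_ideal]
      by (metis empty_subsetI insert_subset order_trans)
    thus False using x(2) principal_ideal_self[of x] by blast
  next
    assume lt: "c < a"
    have "principal_ideal x \<subseteq> ideal_pow P a" by (rule principal_ideal_sub[OF ideal_pow_ideal x(1)])
    also have "\<dots> = Rprod {0} (ideal_pow P c) (ideal_pow P (a - c))"
      using ideal_pow_add[of P c "a - c"] lt by simp
    also have "\<dots> \<subseteq> Rprod {0} (ideal_pow P c) P"
      using ideal_pow_mono[OF Pi, of 1 "a - c"] lt ideal_pow_1[OF Pi] by (intro Rprod_mono) auto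
    finally have "Rprod {0} (ideal_pow P c) C \<subseteq> Rprod {0} (ideal_pow P c) P" using xeq by simp
    hence "C \<subseteq> P"
      using cancellableD[OF cancellable_pow[OF cP] C(1) Pi] ideal_0[OF C(1)] ideal_0[OF Pi] by blast
    hence "ideal_plus C P \<subseteq> P" using ideal_plus_least[OF Pi] by blast
    thus False using C(2) prime_idealD(2)[OF P] by blast
  qed
qed

lemma principal_ideal_prime_power_factor:
  fixes P :: "'a::idom set"
  assumes dd: "dedekind_domain TYPE('a)" and P: "prime_ideal P" "P \<noteq> {0}"
    and x: "x \<in> ideal_pow P a" "x \<notin> ideal_pow P (Suc a)"
  shows "\<exists>C. is_ideal C \<and> principal_ideal x = Rprod {0} (ideal_pow P a) C \<and> ideal_plus C P = UNIV"
proof -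
  have "x \<noteq> 0" using x(2) ideal_0[OF ideal_pow_ideal] by metis
  then obtain c C where C: "is_ideal C" "principal_ideal x = Rprod {0} (ideal_pow P c) C" "ideal_plus C P = UNIV"
    using principal_ideal_split_prime[OF dd P] by blast
  have "c = a"
    using prime_power_exponent_unique[OF _ P(1) x C(1,3,2)] nonzero_prime_cancellable_maximal[OF dd P] by blast
  thus ?thesis using C by blast
qed

lemma prime_power_cancel:
  fixes P :: "'a::idom set"
  assumes dd: "dedekind_domain TYPE('a)" and P: "prime_ideal P" "P \<noteq> {0}"
    and x: "x \<in> ideal_pow P a" "x \<notin> ideal_pow P (Suc a)"
    and b: "b * x \<in> ideal_pow P (a + s)"
  shows "b \<in> ideal_pow P s"
proof -
  have Pi: "is_ideal P" using P prime_idealD by blast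
  have cP: "cancellable {0} P" using nonzero_prime_cancellable_maximal[OF dd P] by blast
  obtain C where C: "is_ideal C" "principal_ideal x = Rprod {0} (ideal_pow P a) C" "ideal_plus C P = UNIV"
    using principal_ideal_prime_power_factor[OF dd P x] by blast
  have "Rprod {0} (ideal_pow P a) (Rprod {0} (principal_ideal b) C) = Rprod {0} (principal_ideal b) (principal_ideal x)"
    using C(2) by (metis Rprod_assoc Rprod_comm)
  also have "\<dots> = principal_ideal (b * x)" by (rule principal_ideal_mult)
  also have "\<dots> \<subseteq> ideal_pow P (a + s)" by (rule principal_ideal_sub[OF ideal_pow_ideal b])
  also have "\<dots> = Rprod {0} (ideal_pow P a) (ideal_pow P s)" by (rule ideal_pow_add)
  finally have sub: "Rprod {0} (ideal_pow P a) (Rprod {0} (principal_ideal b) C) \<subseteq> Rprod {0} (ideal_pow P a) (ideal_pow P s)" .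
  have "Rprod {0} (principal_ideal b) C \<subseteq> ideal_pow P s"
    using cancellableD[OF cancellable_pow[OF cP] Rprod_ideal ideal_pow_ideal _ _ sub]
      ideal_0[OF Rprod_ideal] ideal_0[OF ideal_pow_ideal] by blast
  moreover have "ideal_plus C (ideal_pow P s) = UNIV" by (rule comaximal_pow[OF C(1) Pi C(3)])
  then obtain u v where uv: "u \<in> C" "v \<in> ideal_pow P s" "u + v = 1" using ideal_plus_UNIV_D by blast
  have "b = b * u + b * v" using uv(3) by (metis distrib_left mult.right_neutral)
  moreover have "b * u \<in> Rprod {0} (principal_ideal b) C" by (rule Rprod_mem[OF principal_ideal_self uv(1)])
  moreover have "b * v \<in> ideal_pow P s" by (rule ideal_multL[OF ideal_pow_ideal uv(2)])
  ultimately show ?thesis using ideal_add[OF ideal_pow_ideal] by (metis subsetD)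
qed

lemma prime_power_sub_principal_plus:
  fixes P :: "'a::idom set"
  assumes dd: "dedekind_domain TYPE('a)" and P: "prime_ideal P" "P \<noteq> {0}"
    and x: "x \<in> ideal_pow P a" "x \<notin> ideal_pow P (Suc a)" and ae: "a \<le> e"
  shows "ideal_pow P a \<subseteq> ideal_plus (principal_ideal x) (ideal_pow P e)"
proof
  fix z assume z: "z \<in> ideal_pow P a"
  have Pi: "is_ideal P" using P prime_idealD by blast
  obtain C where C: "is_ideal C" "principal_ideal x = Rprod {0} (ideal_pow P a) C" "ideal_plus C P = UNIV"
    using principal_ideal_prime_power_factor[OF dd P x] by blast
  have "ideal_plus C (ideal_pow P (e - a)) = UNIV" by (rule comaximal_pow[OF C(1) Pi C(3)])
  then obtain u v where uv: "u \<in> C" "v \<in> ideal_pow P (e - a)" "u + v = 1" using ideal_plus_UNIV_D by blast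
  have "z = z * u + z * v" using uv(3) by (metis distrib_left mult.right_neutral)
  moreover have "z * u \<in> principal_ideal x" using C(2) Rprod_mem[OF z uv(1)] by simp
  moreover have "z * v \<in> ideal_pow P e" using ideal_pow_mult[OF z uv(2)] ae by simp
  ultimately show "z \<in> ideal_plus (principal_ideal x) (ideal_pow P e)" using ideal_plus_memI by metis
qed

section \<open>Falling factorials\<close>

definition falling1 :: "(nat \<Rightarrow> 'a::comm_ring_1) \<Rightarrow> nat \<Rightarrow> 'a \<Rightarrow> 'a" where
  "falling1 d i x = (\<Prod>j<i. x - d j)"

definition falling_span :: "(nat \<Rightarrow> 'a::comm_ring_1) \<Rightarrow> nat \<Rightarrow> ('a \<Rightarrow> 'a) \<Rightarrow> bool" where
  "falling_span d k p \<longleftrightarrow> (\<exists>\<beta>. \<forall>x. p x = (\<Sum>i<k. \<beta> i * falling1 d i x))"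

lemma falling1_Suc: "falling1 d (Suc i) x = falling1 d i x * (x - d i)"
  unfolding falling1_def by simp

lemma falling1_0: "falling1 d 0 x = 1" unfolding falling1_def by simp

lemma falling1_0': "falling1 d 0 = (\<lambda>x. 1)" unfolding falling1_def by simp

lemma falling1_zero: "i < m \<Longrightarrow> falling1 d m (d i) = 0"
  unfolding falling1_def by (rule prod_zero) auto

lemma falling_span_zero: "falling_span d k (\<lambda>x. 0)"
  unfolding falling_span_def by (rule exI[of _ "\<lambda>_. 0"]) simp

lemma falling_span_add: "falling_span d k p \<Longrightarrow> falling_span d k q \<Longrightarrow> falling_span d k (\<lambda>x. p x + q x)"
  unfolding falling_span_def
proof -
  assume "\<exists>\<beta>. \<forall>x. p x = (\<Sum>i<k. \<beta> i * falling1 d i x)" "\<exists>\<beta>. \<forall>x. q x = (\<Sum>i<k. \<beta> i * falling1 d i x)"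
  then obtain \<beta> \<gamma> where "\<forall>x. p x = (\<Sum>i<k. \<beta> i * falling1 d i x)" "\<forall>x. q x = (\<Sum>i<k. \<gamma> i * falling1 d i x)" by blast
  hence h: "\<forall>x. p x + q x = (\<Sum>i<k. (\<beta> i + \<gamma> i) * falling1 d i x)" by (simp add: sum.distrib distrib_right)
  show "\<exists>\<beta>. \<forall>x. p x + q x = (\<Sum>i<k. \<beta> i * falling1 d i x)" by (rule exI[of _ "\<lambda>i. \<beta> i + \<gamma> i"], use h in simp)
qed

lemma falling_span_smult: "falling_span d k p \<Longrightarrow> falling_span d k (\<lambda>x. c * p x)"
  unfolding falling_span_def
proof -
  assume "\<exists>\<beta>. \<forall>x. p x = (\<Sum>i<k. \<beta> i * falling1 d i x)"
  then obtain \<beta> where "\<forall>x. p x = (\<Sum>i<k. \<beta> i * falling1 d i x)" by blast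
  hence h: "\<forall>x. c * p x = (\<Sum>i<k. (c * \<beta> i) * falling1 d i x)" by (simp add: sum_distrib_left mult.assoc)
  show "\<exists>\<beta>. \<forall>x. c * p x = (\<Sum>i<k. \<beta> i * falling1 d i x)" by (rule exI[of _ "\<lambda>i. c * \<beta> i"], use h in simp)
qed

lemma falling_span_falling1: "i < k \<Longrightarrow> falling_span d k (falling1 d i)"
  unfolding falling_span_def
proof -
  assume i: "i < k"
  have h: "\<forall>x. falling1 d i x = (\<Sum>j<k. (if j = i then 1 else 0) * falling1 d j x)"
  proof
    fix x
    have "(\<Sum>j<k. (if j = i then 1 else 0) * falling1 d j x) = (\<Sum>j<k. if j = i then falling1 d j x else 0)"
      by (rule sum.cong) auto
    also have "\<dots> = falling1 d i x" using i by (simp add: sum.delta)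
    finally show "falling1 d i x = (\<Sum>j<k. (if j = i then 1 else 0) * falling1 d j x)" by simp
  qed
  show "\<exists>\<beta>. \<forall>x. falling1 d i x = (\<Sum>j<k. \<beta> j * falling1 d j x)" by (rule exI[of _ "\<lambda>j. if j = i then 1 else 0"], use h in simp)
qed

lemma falling_span_sum: "finite S \<Longrightarrow> (\<And>s. s \<in> S \<Longrightarrow> falling_span d k (f s)) \<Longrightarrow> falling_span d k (\<lambda>x. \<Sum>s\<in>S. f s x)"
proof (induction S rule: finite_induct)
  case empty then show ?case by (simp add: falling_span_zero)
next
  case (insert s S)
  then show ?case using falling_span_add[of d k "f s" "\<lambda>x. \<Sum>s\<in>S. f s x"] by simp
qed

lemma falling_span_times_lin: "falling_span d k p \<Longrightarrow> falling_span d (Suc k) (\<lambda>x. (x - c) * p x)"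
proof -
  assume "falling_span d k p"
  then obtain \<beta> where b: "\<forall>x. p x = (\<Sum>i<k. \<beta> i * falling1 d i x)" unfolding falling_span_def by blast
  have e: "(\<lambda>x. (x - c) * p x) = (\<lambda>x. \<Sum>i<k. \<beta> i * (falling1 d (Suc i) x + (d i - c) * falling1 d i x))"
  proof
    fix x
    have "(x - c) * p x = (\<Sum>i<k. \<beta> i * ((x - c) * falling1 d i x))"
      using b by (simp add: sum_distrib_left ac_simps)
    also have "\<dots> = (\<Sum>i<k. \<beta> i * (falling1 d (Suc i) x + (d i - c) * falling1 d i x))"
      by (rule sum.cong) (simp_all add: falling1_Suc algebra_simps)
    finally show "(x - c) * p x = (\<Sum>i<k. \<beta> i * (falling1 d (Suc i) x + (d i - c) * falling1 d i x))" .
  qed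
  have "falling_span d (Suc k) (\<lambda>x. \<beta> i * (falling1 d (Suc i) x + (d i - c) * falling1 d i x))" if "i < k" for i
  proof -
    have "falling_span d (Suc k) (\<lambda>x. falling1 d (Suc i) x + (d i - c) * falling1 d i x)"
      using that by (intro falling_span_add falling_span_smult falling_span_falling1) auto
    thus ?thesis by (rule falling_span_smult)
  qed
  thus ?thesis unfolding e by (intro falling_span_sum) auto
qed

lemma falling1_change_nodes: "\<exists>\<beta>. \<forall>x. falling1 c k x = falling1 d k x + (\<Sum>i<k. \<beta> i * falling1 d i x)"
proof (induction k)
  case 0 then show ?case by (simp add: falling1_0)
next
  case (Suc k)
  then obtain \<beta> where b: "\<forall>x. falling1 c k x = falling1 d k x + (\<Sum>i<k. \<beta> i * falling1 d i x)" by blast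
  have sp: "falling_span d k (\<lambda>x. \<Sum>i<k. \<beta> i * falling1 d i x)" unfolding falling_span_def by blast
  have "falling_span d (Suc k) (\<lambda>x. (d k - c k) * falling1 d k x + (x - c k) * (\<Sum>i<k. \<beta> i * falling1 d i x))"
    by (intro falling_span_add falling_span_smult falling_span_falling1 falling_span_times_lin sp) simp
  then obtain \<gamma> where g: "\<forall>x. (d k - c k) * falling1 d k x + (x - c k) * (\<Sum>i<k. \<beta> i * falling1 d i x)
      = (\<Sum>i<Suc k. \<gamma> i * falling1 d i x)" unfolding falling_span_def by blast
  have "\<forall>x. falling1 c (Suc k) x = falling1 d (Suc k) x + (\<Sum>i<Suc k. \<gamma> i * falling1 d i x)"
  proof
    fix x
    have "falling1 c (Suc k) x = (falling1 d k x + (\<Sum>i<k. \<beta> i * falling1 d i x)) * (x - c k)"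
      using b by (simp add: falling1_Suc)
    also have "\<dots> = falling1 d (Suc k) x + ((d k - c k) * falling1 d k x + (x - c k) * (\<Sum>i<k. \<beta> i * falling1 d i x))"
      by (simp add: falling1_Suc algebra_simps)
    finally show "falling1 c (Suc k) x = falling1 d (Suc k) x + (\<Sum>i<Suc k. \<gamma> i * falling1 d i x)" using g by simp
  qed
  thus ?case by (rule exI[of _ \<gamma>])
qed

lemma power_falling1_expansion: "\<exists>\<gamma>. \<forall>x. x ^ m = (\<Sum>j<Suc m. \<gamma> j * falling1 d j x)"
proof -
  have "falling_span d (Suc m) (\<lambda>x. x ^ m)"
  proof (induction m)
    case 0
    have "falling_span d (Suc 0) (falling1 d 0)" by (rule falling_span_falling1) simp
    thus ?case by (simp add: falling1_0')
  next
    case (Suc m)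
    from falling_span_times_lin[OF Suc, of 0] show ?case by simp
  qed
  thus ?thesis unfolding falling_span_def by blast
qed

lemma falling1_factor: "L \<le> kk \<Longrightarrow> \<exists>w. falling1 d kk y = falling1 d L y * w"
proof (induction kk)
  case 0 then show ?case by (intro exI[of _ 1]) simp
next
  case (Suc kk)
  show ?case
  proof (cases "L = Suc kk")
    case True then show ?thesis by (intro exI[of _ 1]) simp
  next
    case False
    then obtain w where "falling1 d kk y = falling1 d L y * w" using Suc by (metis le_SucE)
    thus ?thesis by (intro exI[of _ "w * (y - d kk)"]) (simp add: falling1_Suc mult.assoc)
  qed
qed

lemma falling_eq: "falling a r k x = (\<Prod>i<r. falling1 (a i) (k i) (x i))"
  unfolding falling_def falling1_def ..

lemma monomial_falling_expansion:
  "\<exists>G. \<forall>x. (\<Prod>i<r. x i ^ m i) = (\<Sum>k\<in>(\<Pi>\<^sub>E i\<in>{..<r}. {..<Suc (m i)}). G k * falling a r k x)"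
proof -
  define \<gamma> where "\<gamma> i = (SOME \<gamma>. \<forall>x. x ^ m i = (\<Sum>j<Suc (m i). \<gamma> j * falling1 (a i) j x))" for i
  have \<gamma>: "x ^ m i = (\<Sum>j<Suc (m i). \<gamma> i j * falling1 (a i) j x)" for i x
    unfolding \<gamma>_def using someI_ex[OF power_falling1_expansion] by blast
  have "(\<Prod>i<r. x i ^ m i) = (\<Sum>k\<in>(\<Pi>\<^sub>E i\<in>{..<r}. {..<Suc (m i)}). (\<Prod>i<r. \<gamma> i (k i)) * falling a r k x)"
    for x
  proof -
    have "(\<Prod>i<r. x i ^ m i) = (\<Prod>i<r. \<Sum>j<Suc (m i). \<gamma> i j * falling1 (a i) j (x i))"
      using \<gamma> by simp
    also have "\<dots> = (\<Sum>k\<in>(\<Pi>\<^sub>E i\<in>{..<r}. {..<Suc (m i)}). \<Prod>i<r. \<gamma> i (k i) * falling1 (a i) (k i) (x i))"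
      by (rule prod_sum_PiE) auto
    finally show ?thesis unfolding falling_eq by (simp add: prod.distrib)
  qed
  thus ?thesis by (intro exI[of _ "\<lambda>k. \<Prod>i<r. \<gamma> i (k i)"]) blast
qed

lemma mpoly_eval_falling_expansion:
  assumes "is_mpoly r cp"
  shows "\<exists>T B. finite T \<and> T \<subseteq> (\<Pi>\<^sub>E i\<in>{..<r}. UNIV) \<and> (\<forall>x. mpoly_eval r cp x = (\<Sum>k\<in>T. B k * falling a r k x))"
proof -
  let ?supp = "{m. cp m \<noteq> 0}" and ?Box = "\<lambda>m. \<Pi>\<^sub>E i\<in>{..<r}. {..<Suc (m i)}"
  have fs: "finite ?supp" using assms unfolding is_mpoly_def by blast
  have "\<forall>m. \<exists>G. \<forall>x. (\<Prod>i<r. x i ^ m i) = (\<Sum>k\<in>?Box m. G k * falling a r k x)"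
    using monomial_falling_expansion by blast
  then obtain G where "\<forall>m. \<forall>x. (\<Prod>i<r. x i ^ m i) = (\<Sum>k\<in>?Box m. G m k * falling a r k x)"
    by (metis choice)
  note G = this[rule_format]
  define T where "T = (\<Union>m\<in>?supp. ?Box m)"
  define B where "B k = (\<Sum>m\<in>?supp. if k \<in> ?Box m then cp m * G m k else 0)" for k
  have fT: "finite T" unfolding T_def using fs by (intro finite_UN_I finite_PiE) auto
  have "mpoly_eval r cp x = (\<Sum>k\<in>T. B k * falling a r k x)" for x
  proof -
    have "mpoly_eval r cp x = (\<Sum>m\<in>?supp. \<Sum>k\<in>?Box m. cp m * G m k * falling a r k x)"
      unfolding mpoly_eval_def G by (simp add: sum_distrib_left mult.assoc)
    also have "\<dots> = (\<Sum>m\<in>?supp. \<Sum>k\<in>T. if k \<in> ?Box m then cp m * G m k * falling a r k x else 0)"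
    proof (rule sum.cong[OF refl])
      fix m assume "m \<in> ?supp"
      hence "?Box m \<subseteq> T" unfolding T_def by (rule UN_upper)
      hence "T \<inter> ?Box m = ?Box m" by (rule Int_absorb1)
      thus "(\<Sum>k\<in>?Box m. cp m * G m k * falling a r k x)
          = (\<Sum>k\<in>T. if k \<in> ?Box m then cp m * G m k * falling a r k x else 0)"
        using sum.inter_restrict[OF fT, of "\<lambda>k. cp m * G m k * falling a r k x" "?Box m"] by simp
    qed
    also have "\<dots> = (\<Sum>k\<in>T. \<Sum>m\<in>?supp. if k \<in> ?Box m then cp m * G m k * falling a r k x else 0)"
      by (rule sum.swap)
    also have "\<dots> = (\<Sum>k\<in>T. B k * falling a r k x)"
      unfolding B_def sum_distrib_right by (intro sum.cong refl) simp
    finally show ?thesis .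
  qed
  moreover have "T \<subseteq> (\<Pi>\<^sub>E i\<in>{..<r}. UNIV)" unfolding T_def by (intro UN_least PiE_mono) auto
  ultimately show ?thesis using fT by blast
qed

lemma sum_PiE_less:
  fixes k k' :: "nat \<Rightarrow> nat"
  assumes "k' \<in> (\<Pi>\<^sub>E i\<in>{..<r}. UNIV)" "k \<in> (\<Pi>\<^sub>E i\<in>{..<r}. UNIV)"
    and "\<forall>i<r. k' i \<le> k i" and "k' \<noteq> k"
  shows "(\<Sum>i<r. k' i) < (\<Sum>i<r. k i)"
proof -
  have "\<exists>i\<in>{..<r}. k' i < k i"
  proof (rule ccontr)
    assume "\<not> (\<exists>i\<in>{..<r}. k' i < k i)"
    hence "k' i = k i" if "i \<in> {..<r}" for i using assms(3) that by (simp add: not_less le_antisym)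
    hence "k' = k" by (rule PiE_ext[OF assms(1,2)])
    thus False using assms(4) by simp
  qed
  from sum_strict_mono_ex1[OF finite_lessThan _ this] assms(3) show ?thesis by auto
qed

locale polyfun_setting =
  fixes J K :: "'a::idom set" and Dset :: "nat \<Rightarrow> 'a set"
    and r n :: nat and P :: "nat \<Rightarrow> 'a set" and e :: "nat \<Rightarrow> nat"
    and aa :: "nat \<Rightarrow> nat \<Rightarrow> nat \<Rightarrow> 'a" and a :: "nat \<Rightarrow> nat \<Rightarrow> 'a"
  assumes dd: "dedekind_domain TYPE('a)"
    and J: "is_ideal J" and KJ: "K \<subseteq> J"
    and Pl: "\<forall>l<n. prime_ideal (P l) \<and> P l \<noteq> {0} \<and> e l \<ge> 1"
    and Pinj: "inj_on P {..<n}"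
    and Kdef: "K = ideal_Prod (\<lambda>l. ideal_pow (P l) (e l)) n"
    and ord: "\<forall>l<n. \<forall>i<r. is_P_ordering K (P l) (Dset i) (aa l i)"
    and acong: "\<forall>i<r. \<forall>j. \<forall>l<n. a i j - aa l i j \<in> Rpow K (P l) (e l)"

begin

text \<open>Q l is the P_l-primary component of K.\<close>
abbreviation Q :: "nat \<Rightarrow> 'a set" where "Q l \<equiv> ideal_pow (P l) (e l)"

lemma K_eq_Rprod_set: "K = Rprod_set {0} Q {..<n}" using Kdef ideal_Prod_eq by metis

lemma K_ideal: "is_ideal K" using K_eq_Rprod_set Rprod_set_ideal by metis

lemma P_prime: "l < n \<Longrightarrow> prime_ideal (P l)" using Pl by blast

lemma P_nonzero: "l < n \<Longrightarrow> P l \<noteq> {0}" using Pl by blast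

lemma P_ideal: "l < n \<Longrightarrow> is_ideal (P l)" using Pl prime_idealD by blast

lemma P_maximal: "l < n \<Longrightarrow> maximal_ideal (P l)" using nonzero_prime_cancellable_maximal[OF dd P_prime P_nonzero] by blast

lemma K_sub_Q: "l < n \<Longrightarrow> K \<subseteq> Q l"
  using Rprod_set_sub_factor[of "{..<n}" l Q "{0}"] K_eq_Rprod_set ideal_pow_ideal ideal_0 by fastforce

lemma K_sub_prime_power: "l < n \<Longrightarrow> t \<le> e l \<Longrightarrow> K \<subseteq> ideal_pow (P l) t"
  using K_sub_Q ideal_pow_mono[OF P_ideal] by blast

lemma P_comaximal: "l < n \<Longrightarrow> m < n \<Longrightarrow> l \<noteq> m \<Longrightarrow> ideal_plus (P l) (P m) = UNIV"
proof -
  assume lm: "l < n" "m < n" "l \<noteq> m"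
  have "\<not> P m \<subseteq> P l"
  proof
    assume "P m \<subseteq> P l"
    hence "P l = P m" using maximal_ideal_eq[OF P_maximal[OF lm(2)] P_ideal[OF lm(1)]] prime_idealD(2)[OF P_prime[OF lm(1)]] by blast
    thus False using Pinj lm unfolding inj_on_def by blast
  qed
  then obtain x where x: "x \<in> P m" "x \<notin> P l" by blast
  hence "ideal_plus (P l) (principal_ideal x) = UNIV" using P_maximal[OF lm(1)] unfolding maximal_ideal_def by blast
  moreover have "ideal_plus (P l) (principal_ideal x) \<subseteq> ideal_plus (P l) (P m)"
    by (rule ideal_plus_mono[OF order_refl principal_ideal_sub[OF P_ideal[OF lm(2)] x(1)]])
  ultimately show ?thesis by blast
qed

lemma prime_powers_comaximal: "l < n \<Longrightarrow> m < n \<Longrightarrow> l \<noteq> m \<Longrightarrow> ideal_plus (ideal_pow (P l) s) (ideal_pow (P m) t) = UNIV"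
proof -
  assume lm: "l < n" "m < n" "l \<noteq> m"
  have "ideal_plus (P m) (ideal_pow (P l) s) = UNIV"
    by (rule comaximal_pow[OF P_ideal[OF lm(2)] P_ideal[OF lm(1)]]) (rule P_comaximal[OF lm(2,1)], use lm in auto)
  hence "ideal_plus (ideal_pow (P l) s) (P m) = UNIV" by (rule comaximal_sym)
  thus ?thesis by (rule comaximal_pow[OF ideal_pow_ideal P_ideal[OF lm(2)]])
qed

definition cofactor :: "nat \<Rightarrow> 'a set" where "cofactor l = Rprod_set {0} Q ({..<n} - {l})"

lemma cofactor_comaximal: "l < n \<Longrightarrow> ideal_plus (ideal_pow (P l) s) (cofactor l) = UNIV"
  unfolding cofactor_def
proof (rule comaximal_Rprod_set[OF ideal_pow_ideal], simp, intro ballI conjI)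
  assume l: "l < n"
  fix j assume "j \<in> {..<n} - {l}"
  hence j: "j < n" "l \<noteq> j" by auto
  show "is_ideal (Q j)" by (rule ideal_pow_ideal)
  show "ideal_plus (ideal_pow (P l) s) (Q j) = UNIV" by (rule prime_powers_comaximal[OF l j])
qed

lemma K_split: "l < n \<Longrightarrow> K = Rprod {0} (Q l) (cofactor l)"
  unfolding cofactor_def using K_eq_Rprod_set Rprod_set_remove[of "{..<n}" l "{0}" Q] by simp

lemma ideal_plus_Rprod_primary:
  assumes A: "is_ideal A" and S: "finite S" "S \<subseteq> {..<n}" and x: "\<forall>l\<in>S. x \<in> ideal_plus A (Q l)"
  shows "x \<in> ideal_plus A (Rprod_set {0} Q S)"
  using S x
proof (induction S rule: finite_induct)
  case empty
  show ?case using ideal_plus_memI[OF ideal_0[OF A], of x UNIV] by (simp add: Rprod_set_empty)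
next
  case (insert m S)
  have m: "m < n" using insert by blast
  have "ideal_plus (Q m) (Rprod_set {0} Q S) = UNIV"
  proof (rule comaximal_Rprod_set[OF ideal_pow_ideal insert(1)], intro ballI conjI)
    fix j assume j: "j \<in> S"
    hence "j < n" "m \<noteq> j" using insert(2,4) by auto
    thus "ideal_plus (Q m) (Q j) = UNIV" using prime_powers_comaximal m by blast
  qed (rule ideal_pow_ideal)
  hence "x \<in> ideal_plus A (Rprod {0} (Q m) (Rprod_set {0} Q S))"
    by (rule ideal_plus_Rprod_comaximal[OF A ideal_pow_ideal Rprod_set_ideal]) (use insert in auto)
  thus ?case by (subst Rprod_set_insert[OF insert(1,2)])
qed

lemma mem_if_mem_mod_primary:
  assumes A: "is_ideal A" "K \<subseteq> A" and x: "\<forall>l<n. x \<in> ideal_plus A (Q l)"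
  shows "x \<in> A"
proof -
  have "x \<in> ideal_plus A K" using ideal_plus_Rprod_primary[OF A(1), of "{..<n}" x] x K_eq_Rprod_set by simp
  moreover have "ideal_plus A K \<subseteq> A" by (rule ideal_plus_least[OF A(1) order_refl A(2)])
  ultimately show ?thesis by blast
qed

lemma prime_power_sub_Rprod_plus_primary:
  assumes m: "m < n" and z: "z \<in> ideal_pow (P m) (t m)"
  shows "z \<in> ideal_plus (Rprod_set {0} (\<lambda>l. ideal_pow (P l) (t l)) {..<n}) (Q m)"
proof -
  define M where "M = Rprod_set {0} (\<lambda>l. ideal_pow (P l) (t l)) ({..<n} - {m})"
  have "ideal_plus (Q m) M = UNIV"
    unfolding M_def
  proof (rule comaximal_Rprod_set[OF ideal_pow_ideal], simp, intro ballI conjI)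
    fix j assume "j \<in> {..<n} - {m}"
    hence j: "j < n" "m \<noteq> j" by auto
    show "is_ideal (ideal_pow (P j) (t j))" by (rule ideal_pow_ideal)
    show "ideal_plus (Q m) (ideal_pow (P j) (t j)) = UNIV" by (rule prime_powers_comaximal[OF m j])
  qed
  then obtain q u where qu: "q \<in> Q m" "u \<in> M" "q + u = 1" using ideal_plus_UNIV_D by blast
  have "Rprod_set {0} (\<lambda>l. ideal_pow (P l) (t l)) {..<n} = Rprod {0} (ideal_pow (P m) (t m)) M"
    unfolding M_def using m by (simp add: Rprod_set_remove)
  hence "z * u \<in> Rprod_set {0} (\<lambda>l. ideal_pow (P l) (t l)) {..<n}" using Rprod_mem[OF z qu(2)] by simp
  moreover have "z * q \<in> Q m" using ideal_multL[OF ideal_pow_ideal qu(1)] .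
  moreover have "z = z * u + z * q" using qu(3) by (metis add.commute distrib_left mult.right_neutral)
  ultimately show ?thesis using ideal_plus_memI by metis
qed

lemma ideal_plus_primary_cong: "is_ideal A \<Longrightarrow> x - y \<in> Q l \<Longrightarrow> y \<in> ideal_plus A (Q l) \<Longrightarrow> x \<in> ideal_plus A (Q l)"
proof -
  assume A: "is_ideal A" and xy: "x - y \<in> Q l" and y: "y \<in> ideal_plus A (Q l)"
  then obtain u v where "u \<in> A" "v \<in> Q l" "y = u + v" unfolding ideal_plus_def by blast
  moreover have "x = u + ((x - y) + v)" using calculation by simp
  ultimately show ?thesis using ideal_plus_memI[of u A "(x - y) + v" "Q l"] ideal_add[OF ideal_pow_ideal xy] by metis
qed

lemma Rpow_eq: "l < n \<Longrightarrow> Rpow K (P l) j = ideal_pow (P l) (min j (e l))"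
proof -
  assume l: "l < n"
  show ?thesis
  proof (cases "j \<le> e l")
    case True
    have "K \<subseteq> ideal_pow (P l) j" using K_sub_prime_power[OF l True] .
    thus ?thesis unfolding Rpow_def using True gen_K_ideal[OF ideal_pow_ideal] by simp
  next
    case False
    have "Rpow K (P l) j \<subseteq> Q l"
      unfolding Rpow_def using ideal_pow_mono[OF P_ideal[OF l], of "e l" j] False K_sub_Q[OF l]
      by (intro gen_least[OF ideal_pow_ideal]) auto
    moreover have "Q l \<subseteq> Rpow K (P l) j"
    proof
      fix z assume z: "z \<in> Q l"
      obtain u v where uv: "u \<in> ideal_pow (P l) j" "v \<in> cofactor l" "u + v = 1"
        using ideal_plus_UNIV_D[OF cofactor_comaximal[OF l]] by blast
      have "z = z * u + z * v" using uv(3) by (metis distrib_left mult.right_neutral)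
      moreover have "z * u \<in> Rpow K (P l) j"
        unfolding Rpow_def using ideal_multL[OF ideal_pow_ideal uv(1)] gen_sub by blast
      moreover have "z * v \<in> K" using K_split[OF l] Rprod_mem[OF z uv(2)] by simp
      hence "z * v \<in> Rpow K (P l) j" unfolding Rpow_def using gen_sub by blast
      ultimately show "z \<in> Rpow K (P l) j" using ideal_add[OF gen_ideal] unfolding Rpow_def by metis
    qed
    ultimately show ?thesis using False by simp
  qed
qed

lemma wP_K: "x \<in> K \<Longrightarrow> wP K Q' x = K" unfolding wP_def by simp

lemma wP_not_K:
  assumes l: "l < n" and x: "x \<notin> K"
  shows "\<exists>lv\<le>e l. wP K (P l) x = ideal_pow (P l) lv \<and> x \<in> ideal_pow (P l) lv
     \<and> (lv < e l \<longrightarrow> x \<notin> ideal_pow (P l) (Suc lv)) \<and> (\<forall>t\<le>e l. x \<in> ideal_pow (P l) t \<longrightarrow> t \<le> lv)"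
proof -
  let ?S = "{t. t \<le> e l \<and> x \<in> ideal_pow (P l) t}"
  have fin: "finite ?S" by (rule finite_subset[of _ "{..e l}"]) auto
  have "0 \<in> ?S" by simp
  hence ne: "?S \<noteq> {}" by blast
  define lv where "lv = Max ?S"
  have lS: "lv \<in> ?S" unfolding lv_def using Max_in[OF fin ne] .
  have lmax: "\<forall>t\<le>e l. x \<in> ideal_pow (P l) t \<longrightarrow> t \<le> lv" unfolding lv_def using Max_ge[OF fin] by blast
  have Rl: "Rpow K (P l) lv = ideal_pow (P l) lv" using Rpow_eq[OF l] lS by simp
  have pr0: "(\<exists>j. ideal_pow (P l) lv = Rpow K (P l) j \<and> x \<in> ideal_pow (P l) lv)
     \<and> (\<forall>j. x \<in> Rpow K (P l) j \<longrightarrow> ideal_pow (P l) lv \<subseteq> Rpow K (P l) j)"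
  proof
    show "\<exists>j. ideal_pow (P l) lv = Rpow K (P l) j \<and> x \<in> ideal_pow (P l) lv" by (rule exI[of _ lv], use Rl lS in simp)
    show "\<forall>j. x \<in> Rpow K (P l) j \<longrightarrow> ideal_pow (P l) lv \<subseteq> Rpow K (P l) j"
    proof (intro allI impI)
      fix j assume "x \<in> Rpow K (P l) j"
      hence "x \<in> ideal_pow (P l) (min j (e l))" using Rpow_eq[OF l] by simp
      hence "min j (e l) \<le> lv" using lmax by simp
      thus "ideal_pow (P l) lv \<subseteq> Rpow K (P l) j"
        using Rpow_eq[OF l] ideal_pow_mono[OF P_ideal[OF l]] by simp
    qed
  qed
  have "wP K (P l) x = ideal_pow (P l) lv"
    unfolding wP_def if_not_P[OF x]
  proof (rule the_equality[of "\<lambda>A. (\<exists>j. A = Rpow K (P l) j \<and> x \<in> A) \<and> (\<forall>j. x \<in> Rpow K (P l) j \<longrightarrow> A \<subseteq> Rpow K (P l) j)", OF pr0])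
    fix A assume A: "(\<exists>j. A = Rpow K (P l) j \<and> x \<in> A) \<and> (\<forall>j. x \<in> Rpow K (P l) j \<longrightarrow> A \<subseteq> Rpow K (P l) j)"
    then obtain j where j: "A = Rpow K (P l) j" "x \<in> A" by blast
    have "x \<in> Rpow K (P l) lv" using Rl lS by simp
    hence "A \<subseteq> ideal_pow (P l) lv" using A Rl by blast
    moreover have "ideal_pow (P l) lv \<subseteq> A" using pr0 j by blast
    ultimately show "A = ideal_pow (P l) lv" by blast
  qed
  moreover have "lv < e l \<longrightarrow> x \<notin> ideal_pow (P l) (Suc lv)"
  proof (intro impI notI)
    assume "lv < e l" "x \<in> ideal_pow (P l) (Suc lv)"
    hence "Suc lv \<le> lv" using lmax by simp
    thus False by simp
  qed
  ultimately show ?thesis using lS lmax by blast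
qed

lemma wP_mem: "l < n \<Longrightarrow> x \<in> wP K (P l) x"
proof (cases "x \<in> K")
  case True then show ?thesis using wP_K by simp
next
  case False
  assume l: "l < n"
  obtain lv where "wP K (P l) x = ideal_pow (P l) lv" "x \<in> ideal_pow (P l) lv" using wP_not_K[OF l False] by blast
  thus ?thesis by simp
qed

lemma wP_sub: "l < n \<Longrightarrow> t \<le> e l \<Longrightarrow> x \<in> ideal_pow (P l) t \<Longrightarrow> wP K (P l) x \<subseteq> ideal_pow (P l) t"
proof (cases "x \<in> K")
  case True
  assume "l < n" "t \<le> e l"
  thus ?thesis using True wP_K K_sub_prime_power by simp
next
  case False
  assume l: "l < n" and t: "t \<le> e l" and x: "x \<in> ideal_pow (P l) t"
  obtain lv where "lv \<le> e l" "wP K (P l) x = ideal_pow (P l) lv" "\<forall>t\<le>e l. x \<in> ideal_pow (P l) t \<longrightarrow> t \<le> lv"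
    using wP_not_K[OF l False] by blast
  thus ?thesis using t x ideal_pow_mono[OF P_ideal[OF l]] by simp
qed

lemma wP_ideal: assumes l: "l < n" shows "is_ideal (wP K (P l) x) \<and> K \<subseteq> wP K (P l) x"
proof (cases "x \<in> K")
  case True
  thus ?thesis using wP_K K_ideal by simp
next
  case False
  then obtain lv where "lv \<le> e l" "wP K (P l) x = ideal_pow (P l) lv" using wP_not_K[OF l] by blast
  thus ?thesis using ideal_pow_ideal K_sub_prime_power[OF l] by simp
qed

lemma is_P_orderingD:
  assumes "is_P_ordering K Q' X d"
  shows "\<And>k. d k \<in> X" "\<And>k y. 0 < k \<Longrightarrow> y \<in> X \<Longrightarrow> wP K Q' (falling1 d k y) \<subseteq> wP K Q' (falling1 d k (d k))"
  using assms unfolding is_P_ordering_def falling1_def by blast+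

text \<open>The value of (x)_i at the node d i has the least P-adic valuation over X; hence the
  valuation of c forced by c (d i)_i \<in> P^t suffices for every point of X.\<close>
lemma P_ordering_scaled_falling1:
  assumes l: "l < n" and d: "is_P_ordering K (P l) X d" and t: "t \<le> e l"
    and c: "c * falling1 d i (d i) \<in> ideal_pow (P l) t" and y: "y \<in> X"
  shows "c * falling1 d i y \<in> ideal_pow (P l) t"
proof (cases "i = 0")
  case True
  then show ?thesis using c by (simp add: falling1_0)
next
  case False
  have Pti: "is_ideal (ideal_pow (P l) t)" by (rule ideal_pow_ideal)
  have wy: "falling1 d i y \<in> wP K (P l) (falling1 d i (d i))"
    using is_P_orderingD(2)[OF d _ y] False wP_mem[OF l] by blast
  show ?thesis
  proof (cases "falling1 d i (d i) \<in> K")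
    case True
    hence "falling1 d i y \<in> K" using wy wP_K by metis
    hence "falling1 d i y \<in> ideal_pow (P l) t" using K_sub_prime_power[OF l t] by blast
    thus ?thesis by (rule ideal_multL[OF Pti])
  next
    case False
    obtain lv where lv: "lv \<le> e l" "wP K (P l) (falling1 d i (d i)) = ideal_pow (P l) lv"
        "falling1 d i (d i) \<in> ideal_pow (P l) lv" "lv < e l \<longrightarrow> falling1 d i (d i) \<notin> ideal_pow (P l) (Suc lv)"
      using wP_not_K[OF l False] by blast
    have fy: "falling1 d i y \<in> ideal_pow (P l) lv" using wy lv(2) by simp
    show ?thesis
    proof (cases "t \<le> lv")
      case True
      hence "falling1 d i y \<in> ideal_pow (P l) t" using fy ideal_pow_mono[OF P_ideal[OF l]] by blast
      thus ?thesis by (rule ideal_multL[OF Pti])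
    next
      case False
      hence lt: "lv < e l" using t by simp
      have "c * falling1 d i (d i) \<in> ideal_pow (P l) (lv + (t - lv))" using c False by simp
      hence "c \<in> ideal_pow (P l) (t - lv)"
        by (rule prime_power_cancel[OF dd P_prime[OF l] P_nonzero[OF l] lv(3) lv(4)[rule_format, OF lt]])
      hence "c * falling1 d i y \<in> ideal_pow (P l) ((t - lv) + lv)" by (rule ideal_pow_mult[OF _ fy])
      thus ?thesis using False by simp
    qed
  qed
qed

text \<open>Evaluating at the nodes d 0, d 1, ... peels off the coefficients one at a time, because
  (d i)_m = 0 for m > i.\<close>
lemma P_ordering_leading_falling1:
  assumes l: "l < n" and d: "is_P_ordering K (P l) X d" and t: "t \<le> e l"
    and hp: "\<forall>y\<in>X. falling1 d k y + (\<Sum>i<k. \<beta> i * falling1 d i y) \<in> ideal_pow (P l) t"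
  shows "\<forall>y\<in>X. falling1 d k y \<in> ideal_pow (P l) t"
proof -
  let ?Pt = "ideal_pow (P l) t"
  have Pti: "is_ideal ?Pt" by (rule ideal_pow_ideal)
  define \<beta>' where "\<beta>' i = (if i = k then 1 else \<beta> i)" for i
  have hp': "(\<Sum>i\<in>{..k}. \<beta>' i * falling1 d i y) \<in> ?Pt" if y: "y \<in> X" for y
  proof -
    have "(\<Sum>i<k. \<beta>' i * falling1 d i y) = (\<Sum>i<k. \<beta> i * falling1 d i y)"
      by (rule sum.cong) (auto simp: \<beta>'_def)
    thus ?thesis using hp y by (simp add: lessThan_Suc_atMost[symmetric] \<beta>'_def add.commute)
  qed
  have "\<forall>y\<in>X. \<beta>' i * falling1 d i y \<in> ?Pt" if "i \<le> k" for i
    using that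
  proof (induction i rule: less_induct)
    case (less i)
    have di: "d i \<in> X" using is_P_orderingD(1)[OF d] .
    have "(\<Sum>m\<in>{..k}. \<beta>' m * falling1 d m (d i)) = (\<Sum>m\<in>{..i}. \<beta>' m * falling1 d m (d i))"
      by (rule sum.mono_neutral_right) (use less.prems falling1_zero[of i _ d] in auto)
    also have "\<dots> = \<beta>' i * falling1 d i (d i) + (\<Sum>m<i. \<beta>' m * falling1 d m (d i))"
      by (simp add: lessThan_Suc_atMost[symmetric])
    finally have e1: "(\<Sum>m\<in>{..k}. \<beta>' m * falling1 d m (d i))
      = \<beta>' i * falling1 d i (d i) + (\<Sum>m<i. \<beta>' m * falling1 d m (d i))" .
    have "(\<Sum>m<i. \<beta>' m * falling1 d m (d i)) \<in> ?Pt"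
      by (rule sum_in_ideal[OF Pti]) (use less.IH less.prems di in auto)
    hence "\<beta>' i * falling1 d i (d i) \<in> ?Pt"
      using ideal_diff[OF Pti hp'[OF di]] e1 by (metis add_diff_cancel_right')
    thus ?case using P_ordering_scaled_falling1[OF l d t] by blast
  qed
  thus ?thesis using \<beta>'_def by fastforce
qed

definition vP_ordering :: "nat \<Rightarrow> nat \<Rightarrow> nat \<Rightarrow> 'a" where
  "vP_ordering l i = (SOME c. is_P_ordering K (P l) (Dset i) c)"

lemma aa_P_ordering: "l < n \<Longrightarrow> i < r \<Longrightarrow> is_P_ordering K (P l) (Dset i) (aa l i)"
  using ord by blast

lemma vP_ordering_P_ordering: "l < n \<Longrightarrow> i < r \<Longrightarrow> is_P_ordering K (P l) (Dset i) (vP_ordering l i)"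
  unfolding vP_ordering_def by (rule someI[of _ "aa l i"]) (rule aa_P_ordering)

lemma vP_eq: "0 < k \<Longrightarrow> vP K (P l) (Dset i) k = wP K (P l) (falling1 (vP_ordering l i) k (vP_ordering l i k))"
  unfolding vP_def vP_ordering_def falling1_def Let_def by simp

lemma vX_eq: "vX K P n X k = Rprod_set K (\<lambda>l. vP K (P l) X k) {..<n}"
  unfolding vX_def Rprod_fam_eq ..

lemma vX_ideal: "is_ideal (vX K P n X k)" unfolding vX_eq by (rule Rprod_set_ideal)

lemma vX_K: "K \<subseteq> vX K P n X k" unfolding vX_eq by (rule Rprod_set_K)

lemma Rpow_e_eq_Q: "l < n \<Longrightarrow> Rpow K (P l) (e l) = Q l" using Rpow_eq by simp

lemma a_cong_aa: "i < r \<Longrightarrow> l < n \<Longrightarrow> a i j - aa l i j \<in> Q l"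
  using acong Rpow_e_eq_Q by metis

lemma P_ordering_falling1_in_wP:
  assumes l: "l < n" and c: "is_P_ordering K (P l) X c" and k: "0 < k" and y: "y \<in> X"
  shows "falling1 c k y \<in> wP K (P l) (falling1 c k (c k))"
  using is_P_orderingD(2)[OF c k y] wP_mem[OF l] by blast

lemma falling1_transfer:
  assumes m: "m < n" and d: "is_P_ordering K (P m) X d" and t: "t \<le> e m"
    and c: "\<forall>y\<in>X. falling1 c k y \<in> ideal_pow (P m) t"
  shows "\<forall>y\<in>X. falling1 d k y \<in> ideal_pow (P m) t"
proof -
  obtain \<beta> where "\<forall>x. falling1 c k x = falling1 d k x + (\<Sum>i<k. \<beta> i * falling1 d i x)"
    using falling1_change_nodes by blast
  thus ?thesis using P_ordering_leading_falling1[OF m d t] c by simp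
qed

lemma vP_ideal: assumes l: "l < n" shows "is_ideal (vP K (P l) X k) \<and> K \<subseteq> vP K (P l) X k"
proof (cases "k = 0")
  case True
  thus ?thesis unfolding vP_def using ideal_UNIV by simp
next
  case False
  show ?thesis unfolding vP_def if_not_P[OF False] Let_def by (rule wP_ideal[OF l])
qed

lemma vX_0: "vX K P n X 0 = UNIV"
proof -
  have "1 \<in> vX K P n X 0"
    unfolding vX_eq by (rule Rprod_set_mem[where f = "\<lambda>_. 1", simplified]) (simp add: vP_def)
  thus ?thesis using ideal_1[OF vX_ideal] by blast
qed

lemma vX_sub_vP: "l < n \<Longrightarrow> vX K P n X k \<subseteq> vP K (P l) X k"
  unfolding vX_eq using Rprod_set_sub_factor[of "{..<n}" l "\<lambda>l. vP K (P l) X k" K] vP_ideal by simp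

lemma vX_sub_prime_power:
  assumes m: "m < n" "i < r" and k: "0 < k" and c: "is_P_ordering K (P m) (Dset i) c"
    and t: "t \<le> e m" and h: "falling1 c k (c k) \<in> ideal_pow (P m) t"
  shows "vX K P n (Dset i) k \<subseteq> ideal_pow (P m) t"
proof -
  have "\<forall>y\<in>Dset i. falling1 c k y \<in> ideal_pow (P m) t"
    using P_ordering_falling1_in_wP[OF m(1) c k] wP_sub[OF m(1) t h] by blast
  hence "\<forall>y\<in>Dset i. falling1 (vP_ordering m i) k y \<in> ideal_pow (P m) t"
    by (rule falling1_transfer[OF m(1) vP_ordering_P_ordering[OF m] t])
  hence "falling1 (vP_ordering m i) k (vP_ordering m i k) \<in> ideal_pow (P m) t"
    using is_P_orderingD(1)[OF vP_ordering_P_ordering[OF m]] by blast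
  hence "vP K (P m) (Dset i) k \<subseteq> ideal_pow (P m) t" unfolding vP_eq[OF k] by (rule wP_sub[OF m(1) t])
  thus ?thesis using vX_sub_vP[OF m(1)] by blast
qed

lemma falling1_aa_in_vX_plus_primary:
  assumes i: "i < r" and m: "m < n" and y: "y \<in> Dset i"
  shows "falling1 (aa m i) k y \<in> ideal_plus (vX K P n (Dset i) k) (Q m)"
proof (cases "k = 0")
  case True
  thus ?thesis using vX_0 ideal_plus_subL[OF ideal_pow_ideal] by blast
next
  case False
  hence k: "0 < k" by simp
  show ?thesis
  proof (cases "\<exists>l<n. falling1 (vP_ordering l i) k (vP_ordering l i k) \<in> K")
    case True
    then obtain l where l: "l < n" "falling1 (vP_ordering l i) k (vP_ordering l i k) \<in> K" by blast
    have "\<forall>y\<in>Dset i. falling1 (vP_ordering l i) k y \<in> ideal_pow (P m) (e m)"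
      using P_ordering_falling1_in_wP[OF l(1) vP_ordering_P_ordering[OF l(1) i] k] wP_K[OF l(2)] K_sub_Q[OF m]
      by blast
    hence "falling1 (aa m i) k y \<in> Q m"
      using falling1_transfer[OF m aa_P_ordering[OF m i] order_refl] y by blast
    thus ?thesis using ideal_plus_subR[OF vX_ideal] by blast
  next
    case False
    hence "\<forall>l. \<exists>lv. l < n \<longrightarrow> lv \<le> e l \<and> wP K (P l) (falling1 (vP_ordering l i) k (vP_ordering l i k)) = ideal_pow (P l) lv"
      using wP_not_K by metis
    then obtain lv where lv: "\<And>l. l < n \<Longrightarrow> lv l \<le> e l \<and> wP K (P l) (falling1 (vP_ordering l i) k (vP_ordering l i k)) = ideal_pow (P l) (lv l)"
      by metis
    have vPl: "vP K (P l) (Dset i) k = ideal_pow (P l) (lv l)" if "l < n" for l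
      using vP_eq[OF k] lv[OF that] by simp
    have "\<forall>y\<in>Dset i. falling1 (vP_ordering m i) k y \<in> ideal_pow (P m) (lv m)"
      using P_ordering_falling1_in_wP[OF m vP_ordering_P_ordering[OF m i] k] lv[OF m] by simp
    hence "falling1 (aa m i) k y \<in> ideal_pow (P m) (lv m)"
      using falling1_transfer[OF m aa_P_ordering[OF m i]] lv[OF m] y by blast
    hence "falling1 (aa m i) k y \<in> ideal_plus (Rprod_set {0} (\<lambda>l. ideal_pow (P l) (lv l)) {..<n}) (Q m)"
      by (rule prime_power_sub_Rprod_plus_primary[OF m])
    moreover have "Rprod_set {0} (\<lambda>l. ideal_pow (P l) (lv l)) {..<n} \<subseteq> vX K P n (Dset i) k"
      unfolding vX_eq by (rule Rprod_set_mono) (use vPl ideal_0[OF K_ideal] in auto)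
    ultimately show ?thesis using ideal_plus_mono by blast
  qed
qed

lemma falling1_in_vX_if_local:
  assumes i: "i < r" and y: "\<forall>m<n. \<exists>y'\<in>Dset i. falling1 (a i) k y - falling1 (aa m i) k y' \<in> Q m"
  shows "falling1 (a i) k y \<in> vX K P n (Dset i) k"
proof (rule mem_if_mem_mod_primary[OF vX_ideal vX_K], intro allI impI)
  fix m assume m: "m < n"
  then obtain y' where y': "y' \<in> Dset i" "falling1 (a i) k y - falling1 (aa m i) k y' \<in> Q m" using y by blast
  show "falling1 (a i) k y \<in> ideal_plus (vX K P n (Dset i) k) (Q m)"
    by (rule ideal_plus_primary_cong[OF vX_ideal y'(2) falling1_aa_in_vX_plus_primary[OF i m y'(1)]])
qed

lemma falling1_cong_nodes: "i < r \<Longrightarrow> m < n \<Longrightarrow> falling1 (a i) k y - falling1 (aa m i) k y \<in> Q m"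
  unfolding falling1_def
proof (rule prod_diff_in_ideal[OF ideal_pow_ideal])
  fix j assume "i < r" "m < n"
  hence "a i j - aa m i j \<in> Q m" by (rule a_cong_aa)
  hence "- (a i j - aa m i j) \<in> Q m" by (rule ideal_uminus[OF ideal_pow_ideal])
  thus "y - a i j - (y - aa m i j) \<in> Q m" by (simp add: algebra_simps)
qed

lemma falling1_at_node_cong: "i < r \<Longrightarrow> m < n \<Longrightarrow> falling1 (a i) k (a i kk) - falling1 (aa m i) k (aa m i kk) \<in> Q m"
  unfolding falling1_def
proof (rule prod_diff_in_ideal[OF ideal_pow_ideal])
  fix j assume "i < r" "m < n"
  hence "(a i kk - aa m i kk) - (a i j - aa m i j) \<in> Q m"
    using a_cong_aa ideal_diff[OF ideal_pow_ideal] by blast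
  thus "a i kk - a i j - (aa m i kk - aa m i j) \<in> Q m" by (simp add: algebra_simps)
qed

lemma falling1_in_vX: "i < r \<Longrightarrow> y \<in> Dset i \<Longrightarrow> falling1 (a i) k y \<in> vX K P n (Dset i) k"
  by (rule falling1_in_vX_if_local) (use falling1_cong_nodes in blast)+

lemma falling1_at_node_in_vX: "i < r \<Longrightarrow> falling1 (a i) k (a i kk) \<in> vX K P n (Dset i) k"
proof (rule falling1_in_vX_if_local)
  assume i: "i < r"
  show "\<forall>m<n. \<exists>y'\<in>Dset i. falling1 (a i) k (a i kk) - falling1 (aa m i) k y' \<in> Q m"
  proof (intro allI impI)
    fix m assume m: "m < n"
    have "aa m i kk \<in> Dset i" using is_P_orderingD(1)[OF aa_P_ordering[OF m i]] .
    thus "\<exists>y'\<in>Dset i. falling1 (a i) k (a i kk) - falling1 (aa m i) k y' \<in> Q m" using falling1_at_node_cong[OF i m] by blast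
  qed
qed

text \<open>Locally at P_m the node value (a_{i,k})_k is congruent to the node value of the
  P_m-ordering aa m i, whose valuation is exactly that of v_k(X_i, P_m).\<close>
lemma vX_sub_gen_falling1_mod_primary:
  assumes i: "i < r" and m: "m < n" and z: "z \<in> vX K P n (Dset i) k"
  shows "z \<in> ideal_plus (ideal_gen ({falling1 (a i) k (a i k)} \<union> K)) (Q m)"
proof -
  let ?g = "falling1 (a i) k (a i k)" and ?h = "falling1 (aa m i) k (aa m i k)"
  let ?G = "ideal_gen ({?g} \<union> K)"
  have Gi: "is_ideal ?G" by (rule gen_ideal)
  have gG: "?g \<in> ?G" using gen_sub by blast
  show ?thesis
  proof (cases "k = 0")
    case True
    hence "?g = 1" by (simp add: falling1_0)
    hence "?G = UNIV" using ideal_1[OF Gi] gG by simp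
    thus ?thesis using ideal_plus_subL[OF ideal_pow_ideal] by blast
  next
    case False
    hence k: "0 < k" by simp
    note vX_sub = vX_sub_prime_power[OF m i k aa_P_ordering[OF m i]]
    show ?thesis
    proof (cases "?h \<in> Q m")
      case True
      hence "z \<in> Q m" using vX_sub[OF order_refl] z by blast
      thus ?thesis using ideal_plus_subR[OF Gi] by blast
    next
      case False
      then obtain mu where mu: "mu < e m" "?h \<in> ideal_pow (P m) mu" "?h \<notin> ideal_pow (P m) (Suc mu)"
        using ideal_pow_exact by blast
      have "z \<in> ideal_pow (P m) mu" using vX_sub[of mu] mu(1,2) z by (meson less_imp_le subsetD)
      hence "z \<in> ideal_plus (principal_ideal ?h) (Q m)"
        using prime_power_sub_principal_plus[OF dd P_prime[OF m] P_nonzero[OF m] mu(2,3) less_imp_le[OF mu(1)]] by blast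
      then obtain d q where dq: "q \<in> Q m" "z = ?h * d + q"
        unfolding ideal_plus_def principal_ideal_def by auto
      have "?h - ?g \<in> Q m" using ideal_uminus[OF ideal_pow_ideal falling1_at_node_cong[OF i m]] by simp
      hence "(?h - ?g) * d + q \<in> Q m" using ideal_add[OF ideal_pow_ideal ideal_multR[OF ideal_pow_ideal] dq(1)] by blast
      moreover have "?g * d \<in> ?G" by (rule ideal_multR[OF Gi gG])
      moreover have "z = ?g * d + ((?h - ?g) * d + q)" using dq(2) by (simp add: algebra_simps)
      ultimately show ?thesis using ideal_plus_memI by metis
    qed
  qed
qed

lemma vX_sub_gen_falling1:
  assumes i: "i < r"
  shows "vX K P n (Dset i) k \<subseteq> ideal_gen ({falling1 (a i) k (a i k)} \<union> K)"
  using mem_if_mem_mod_primary[OF gen_ideal gen_sub[THEN subset_trans[OF Un_upper2]]]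
    vX_sub_gen_falling1_mod_primary[OF i] by blast

abbreviation Vfac :: "(nat \<Rightarrow> nat) \<Rightarrow> 'a set" where
  "Vfac k \<equiv> Rprod_fam K (\<lambda>i. vX K P n (Dset i) (k i)) r"

lemma Vfac_eq: "Vfac k = Rprod_set K (\<lambda>i. vX K P n (Dset i) (k i)) {..<r}"
  by (rule Rprod_fam_eq)

lemma falling_in_Vfac: "x \<in> (\<Pi>\<^sub>E i\<in>{..<r}. Dset i) \<Longrightarrow> falling a r k x \<in> Vfac k"
  unfolding Vfac_eq falling_eq by (rule Rprod_set_mem) (use falling1_in_vX in auto)

lemma falling_at_nodes_in_Vfac: "falling a r k (\<lambda>i. a i (kk i)) \<in> Vfac k"
  unfolding Vfac_eq falling_eq by (rule Rprod_set_mem) (use falling1_at_node_in_vX in auto)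

lemma Vfac_sub_gen_falling_at_nodes:
  "Vfac k \<subseteq> ideal_gen ({falling a r k (\<lambda>i. a i (k i))} \<union> K)"
  unfolding Vfac_eq falling_eq
proof (rule Rprod_set_least[OF gen_ideal])
  show "K \<subseteq> ideal_gen ({\<Prod>i<r. falling1 (a i) (k i) (a i (k i))} \<union> K)" using gen_sub by blast
  fix f assume "\<And>i. i \<in> {..<r} \<Longrightarrow> f i \<in> vX K P n (Dset i) (k i)"
  hence "\<forall>i\<in>{..<r}. f i \<in> ideal_gen ({falling1 (a i) (k i) (a i (k i))} \<union> K)"
    using vX_sub_gen_falling1 by blast
  thus "(\<Prod>i<r. f i) \<in> ideal_gen ({\<Prod>i<r. falling1 (a i) (k i) (a i (k i))} \<union> K)"
    by (rule prod_mem_gen_single[OF finite_lessThan])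
qed

lemma Ann_Vfac_if_annihilates_falling:
  "c * falling a r k (\<lambda>i. a i (k i)) \<in> J \<Longrightarrow> c \<in> Ann J (Vfac k)"
  using Ann_gen_single[OF J KJ] Ann_antimono[OF Vfac_sub_gen_falling_at_nodes] by blast

lemma falling1_beyond_card_in_primary:
  assumes m: "m < n" and d: "is_P_ordering K (P m) X d" and fin: "finite X"
    and kk: "card X \<le> kk" and y: "y \<in> X"
  shows "falling1 d kk y \<in> Q m"
proof (cases "inj_on d {..<card X}")
  case True
  have "d ` {..<card X} \<subseteq> X" using is_P_orderingD(1)[OF d] by blast
  moreover have "card (d ` {..<card X}) = card X" using card_image[OF True] by simp
  ultimately have "d ` {..<card X} = X" using card_subset_eq[OF fin] by blast
  then obtain j where j: "j < card X" "y = d j" using y by blast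
  hence "falling1 d kk y = 0" using falling1_zero[of j kk d] kk by simp
  thus ?thesis using ideal_0[OF ideal_pow_ideal] by simp
next
  case False
  then obtain j1 j2 where j: "j1 < card X" "j2 < card X" "j1 \<noteq> j2" "d j1 = d j2"
    unfolding inj_on_def by blast
  define j where "j = max j1 j2"
  define j' where "j' = min j1 j2"
  have jj: "j' < j" "d j' = d j" "j < card X" using j unfolding j_def j'_def by (auto simp: max_def min_def)
  have "falling1 d j (d j) = 0" using falling1_zero[of j' j d] jj by simp
  hence "falling1 d j (d j) \<in> K" using ideal_0[OF K_ideal] by simp
  hence "wP K (P m) (falling1 d j (d j)) = K" by (rule wP_K)
  moreover have "falling1 d j y \<in> wP K (P m) (falling1 d j (d j))"
    using is_P_orderingD(2)[OF d _ y, of j] jj wP_mem[OF m] by auto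
  ultimately have "falling1 d j y \<in> K" by simp
  hence fj: "falling1 d j y \<in> Q m" using K_sub_Q[OF m] by blast
  obtain w where "falling1 d kk y = falling1 d j y * w" using falling1_factor[of j kk d y] jj kk by auto
  thus ?thesis using ideal_multR[OF ideal_pow_ideal fj] by simp
qed

lemma falling1_beyond_mu_in_J:
  assumes i: "i < r" and kk: "\<not> enat kk < mu K P n J (Dset i)" and y: "y \<in> Dset i"
  shows "falling1 (a i) kk y \<in> J"
proof (cases "\<exists>k>0. vX K P n (Dset i) k \<subseteq> J")
  case True
  define L where "L = (LEAST k. k > 0 \<and> vX K P n (Dset i) k \<subseteq> J)"
  have L: "L > 0 \<and> vX K P n (Dset i) L \<subseteq> J" unfolding L_def using True by (metis (mono_tags, lifting) LeastI)
  have "mu K P n J (Dset i) = enat L" unfolding mu_def L_def using True by simp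
  hence "L \<le> kk" using kk by simp
  then obtain w where w: "falling1 (a i) kk y = falling1 (a i) L y * w" using falling1_factor by blast
  have "falling1 (a i) L y \<in> J" using falling1_in_vX[OF i y] L by blast
  thus ?thesis using w ideal_multR[OF J] by simp
next
  case False
  show ?thesis
  proof (cases "finite (Dset i)")
    case True
    have "mu K P n J (Dset i) = enat (card (Dset i))" unfolding mu_def if_not_P[OF False] if_P[OF True] ..
    hence ck: "card (Dset i) \<le> kk" using kk by simp
    have "falling1 (a i) kk y \<in> K"
    proof (rule mem_if_mem_mod_primary[OF K_ideal order_refl], intro allI impI)
      fix m assume m: "m < n"
      have "falling1 (aa m i) kk y \<in> Q m" by (rule falling1_beyond_card_in_primary[OF m aa_P_ordering[OF m i] True ck y])
      hence "falling1 (aa m i) kk y \<in> ideal_plus K (Q m)" using ideal_plus_subR[OF K_ideal] by blast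
      thus "falling1 (a i) kk y \<in> ideal_plus K (Q m)" by (rule ideal_plus_primary_cong[OF K_ideal falling1_cong_nodes[OF i m]])
    qed
    thus ?thesis using KJ by blast
  next
    case False2: False
    have "mu K P n J (Dset i) = \<infinity>" unfolding mu_def if_not_P[OF False] if_not_P[OF False2] ..
    thus ?thesis using kk by simp
  qed
qed

lemma falling1_cong_point: "i < r \<Longrightarrow> m < n \<Longrightarrow> falling1 (a i) k (a i kk) - falling1 (a i) k (aa m i kk) \<in> Q m"
  unfolding falling1_def
proof (rule prod_diff_in_ideal[OF ideal_pow_ideal])
  fix j assume "i < r" "m < n"
  hence "a i kk - aa m i kk \<in> Q m" by (rule a_cong_aa)
  thus "a i kk - a i j - (aa m i kk - a i j) \<in> Q m" by (simp add: algebra_simps)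
qed

abbreviation Idx :: "(nat \<Rightarrow> nat) set" where "Idx \<equiv> index_set K P n J Dset r"

lemma index_set_PiE: "Idx \<subseteq> (\<Pi>\<^sub>E i\<in>{..<r}. UNIV)" unfolding index_set_def by blast

lemma Rsupp_index_set: "Rsupp K Idx b \<subseteq> Idx" unfolding Rsupp_def by blast

lemma falling_notin_index_set_in_J:
  assumes k: "k \<in> (\<Pi>\<^sub>E i\<in>{..<r}. UNIV)" and nk: "k \<notin> Idx" and x: "x \<in> (\<Pi>\<^sub>E i\<in>{..<r}. Dset i)"
  shows "falling a r k x \<in> J"
proof -
  obtain i where i: "i < r" "\<not> enat (k i) < mu K P n J (Dset i)"
    using k nk unfolding index_set_def by blast
  have xi: "x i \<in> Dset i" using x i(1) by blast
  have f: "falling1 (a i) (k i) (x i) \<in> J" by (rule falling1_beyond_mu_in_J[OF i xi])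
  have "falling a r k x = falling1 (a i) (k i) (x i) * (\<Prod>j\<in>{..<r} - {i}. falling1 (a j) (k j) (x j))"
    unfolding falling_eq using i(1) by (simp add: prod.remove)
  thus ?thesis using ideal_multR[OF J f] by simp
qed

lemma sum_Rsupp_diff_in_K:
  assumes U: "finite U" "Rsupp K Idx b \<subseteq> U" "U \<subseteq> Idx"
  shows "(\<Sum>k\<in>Rsupp K Idx b. b k * falling a r k x) - (\<Sum>k\<in>U. b k * falling a r k x) \<in> K"
proof -
  have "(\<Sum>k\<in>U. b k * falling a r k x) = (\<Sum>k\<in>U - Rsupp K Idx b. b k * falling a r k x) + (\<Sum>k\<in>Rsupp K Idx b. b k * falling a r k x)"
    by (rule sum.subset_diff[OF U(2,1)])
  moreover have "(\<Sum>k\<in>U - Rsupp K Idx b. b k * falling a r k x) \<in> K"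
  proof (rule sum_in_ideal[OF K_ideal])
    fix k assume "k \<in> U - Rsupp K Idx b"
    hence "b k \<in> K" using U(3) unfolding Rsupp_def by blast
    thus "b k * falling a r k x \<in> K" by (rule ideal_multR[OF K_ideal])
  qed
  ultimately show ?thesis using ideal_uminus[OF K_ideal] by (simp add: algebra_simps)
qed

lemma J_diff_iff: "A - B \<in> J \<Longrightarrow> (A - c \<in> J \<longleftrightarrow> B - c \<in> J)"
proof -
  assume ab: "A - B \<in> J"
  have "B - c = (A - c) - (A - B)" "A - c = (B - c) + (A - B)" by simp_all
  thus ?thesis using ideal_diff[OF J _ ab] ideal_add[OF J _ ab] by metis
qed

lemma represents_iff_sum_over:
  assumes U: "finite U" "Rsupp K Idx b \<subseteq> U" "U \<subseteq> Idx"
  shows "represents K J Dset r a Idx b f \<longleftrightarrow>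
    (\<forall>x\<in>(\<Pi>\<^sub>E i\<in>{..<r}. Dset i). (\<Sum>k\<in>U. b k * falling a r k x) - f x \<in> J)"
  unfolding represents_def using J_diff_iff sum_Rsupp_diff_in_K[OF U] KJ by blast

text \<open>The nodes a i j need not lie in the grid, but modulo each P_m^{e_m} they agree with the
  grid points aa m i j.\<close>
lemma sum_at_nodes_in_J:
  assumes hD: "\<forall>x\<in>(\<Pi>\<^sub>E i\<in>{..<r}. Dset i). (\<Sum>k\<in>U. c k * falling a r k x) \<in> J"
  shows "(\<Sum>k'\<in>U. c k' * falling a r k' (\<lambda>i. a i (k i))) \<in> J"
proof (rule mem_if_mem_mod_primary[OF J KJ], intro allI impI)
  fix m assume m: "m < n"
  let ?z = "\<lambda>i. a i (k i)" and ?xm = "restrict (\<lambda>i. aa m i (k i)) {..<r}"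
  have xm: "?xm \<in> (\<Pi>\<^sub>E i\<in>{..<r}. Dset i)" using is_P_orderingD(1)[OF aa_P_ordering[OF m]] by auto
  have "(\<Sum>k'\<in>U. c k' * falling a r k' ?z) - (\<Sum>k'\<in>U. c k' * falling a r k' ?xm)
     = (\<Sum>k'\<in>U. c k' * (falling a r k' ?z - falling a r k' ?xm))"
    by (simp add: sum_subtractf right_diff_distrib)
  also have "\<dots> \<in> Q m"
  proof (rule sum_in_ideal[OF ideal_pow_ideal], rule ideal_multL[OF ideal_pow_ideal])
    fix k' assume "k' \<in> U"
    show "falling a r k' ?z - falling a r k' ?xm \<in> Q m"
      unfolding falling_eq
    proof (rule prod_diff_in_ideal[OF ideal_pow_ideal])
      fix i assume "i \<in> {..<r}"
      thus "falling1 (a i) (k' i) (a i (k i)) - falling1 (a i) (k' i) (?xm i) \<in> Q m"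
        using falling1_cong_point[of i m "k' i" "k i"] m by simp
    qed
  qed
  finally have d: "(\<Sum>k'\<in>U. c k' * falling a r k' ?z) - (\<Sum>k'\<in>U. c k' * falling a r k' ?xm) \<in> Q m" .
  have "(\<Sum>k'\<in>U. c k' * falling a r k' ?xm) \<in> ideal_plus J (Q m)"
    using hD xm ideal_plus_subL[OF ideal_pow_ideal] by blast
  thus "(\<Sum>k'\<in>U. c k' * falling a r k' ?z) \<in> ideal_plus J (Q m)" by (rule ideal_plus_primary_cong[OF J d])
qed

text \<open>Evaluating at the node of k isolates c k: the terms with some k' i > k i vanish there, and
  the remaining k' \<noteq> k have smaller total degree, so their coefficients are already known to
  annihilate Vfac k', which contains their values at the nodes.\<close>
lemma coefficients_in_Ann:
  assumes U: "finite U" "U \<subseteq> Idx"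
    and hD: "\<forall>x\<in>(\<Pi>\<^sub>E i\<in>{..<r}. Dset i). (\<Sum>k\<in>U. c k * falling a r k x) \<in> J"
  shows "\<forall>k\<in>U. c k \<in> Ann J (Vfac k)"
proof -
  have "\<forall>k. (\<Sum>i<r. k i) = w \<longrightarrow> k \<in> U \<longrightarrow> c k \<in> Ann J (Vfac k)" for w
  proof (induction w rule: less_induct)
    case (less w)
    show ?case
    proof (intro allI impI)
      fix k assume wk: "(\<Sum>i<r. k i) = w" and kU: "k \<in> U"
      let ?z = "\<lambda>i. a i (k i)"
      have "c k' * falling a r k' ?z \<in> J" if k': "k' \<in> U - {k}" for k'
      proof (cases "\<forall>i<r. k' i \<le> k i")
        case True
        have "k \<in> (\<Pi>\<^sub>E i\<in>{..<r}. UNIV)" "k' \<in> (\<Pi>\<^sub>E i\<in>{..<r}. UNIV)"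
          using kU k' U(2) index_set_PiE by blast+
        moreover have "k' \<noteq> k" using k' by blast
        ultimately have "(\<Sum>i<r. k' i) < (\<Sum>i<r. k i)" using sum_PiE_less True by blast
        hence "c k' \<in> Ann J (Vfac k')" using less.IH wk k' by blast
        thus ?thesis using falling_at_nodes_in_Vfac unfolding Ann_def by blast
      next
        case False
        then obtain i where i: "i < r" "k i < k' i" by (auto simp: not_le)
        have "falling1 (a i) (k' i) (a i (k i)) = 0" by (rule falling1_zero[OF i(2)])
        hence "falling a r k' ?z = 0" unfolding falling_eq using i(1) by (intro prod_zero) auto
        thus ?thesis using ideal_0[OF J] by simp
      qed
      hence "(\<Sum>k'\<in>U - {k}. c k' * falling a r k' ?z) \<in> J" by (intro sum_in_ideal[OF J])
      hence "(\<Sum>k'\<in>U. c k' * falling a r k' ?z) - (\<Sum>k'\<in>U - {k}. c k' * falling a r k' ?z) \<in> J"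
        by (rule ideal_diff[OF J sum_at_nodes_in_J[OF hD]])
      moreover have "(\<Sum>k'\<in>U. c k' * falling a r k' ?z)
          = c k * falling a r k ?z + (\<Sum>k'\<in>U - {k}. c k' * falling a r k' ?z)"
        by (rule sum.remove[OF U(1) kU])
      ultimately have "c k * falling a r k ?z \<in> J" by simp
      thus "c k \<in> Ann J (Vfac k)" by (rule Ann_Vfac_if_annihilates_falling)
    qed
  qed
  thus ?thesis by blast
qed

lemma represents_iff_diff_vanishes:
  assumes U: "finite U" "Rsupp K Idx b \<subseteq> U" "Rsupp K Idx b' \<subseteq> U" "U \<subseteq> Idx"
    and rb: "represents K J Dset r a Idx b f"
  shows "represents K J Dset r a Idx b' f \<longleftrightarrow>
     (\<forall>x\<in>(\<Pi>\<^sub>E i\<in>{..<r}. Dset i). (\<Sum>k\<in>U. (b k - b' k) * falling a r k x) \<in> J)"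
proof -
  have "(\<Sum>k\<in>U. b' k * falling a r k x) - f x \<in> J \<longleftrightarrow> (\<Sum>k\<in>U. (b k - b' k) * falling a r k x) \<in> J"
    if x: "x \<in> (\<Pi>\<^sub>E i\<in>{..<r}. Dset i)" for x
  proof -
    let ?A = "(\<Sum>k\<in>U. b k * falling a r k x) - f x" and ?B = "(\<Sum>k\<in>U. b' k * falling a r k x) - f x"
    have "?A \<in> J" using rb represents_iff_sum_over[OF U(1,2,4)] x by blast
    moreover have "(\<Sum>k\<in>U. (b k - b' k) * falling a r k x) = ?A - ?B"
      by (simp add: sum_subtractf left_diff_distrib)
    ultimately show ?thesis using ideal_diff_iff[OF J, of ?A ?B] by simp
  qed
  thus ?thesis using represents_iff_sum_over[OF U(1,3,4)] by blast
qed

lemma K_sub_Ann: "K \<subseteq> Ann J A"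
  unfolding Ann_def using ideal_multR[OF K_ideal] KJ by blast

lemma represents_iff_coefficients_congruent:
  assumes fb: "finite (Rsupp K Idx b)" and rb: "represents K J Dset r a Idx b f"
    and fb': "finite (Rsupp K Idx b')"
  shows "represents K J Dset r a Idx b' f \<longleftrightarrow> (\<forall>k\<in>Idx. b k - b' k \<in> Ann J (Vfac k))"
proof -
  define U where "U = Rsupp K Idx b \<union> Rsupp K Idx b'"
  have U: "finite U" "Rsupp K Idx b \<subseteq> U" "Rsupp K Idx b' \<subseteq> U" "U \<subseteq> Idx"
    using fb fb' Rsupp_index_set unfolding U_def by auto
  have outside: "b k - b' k \<in> Ann J (Vfac k)" if "k \<in> Idx - U" for k
  proof -
    have "b k \<in> K" "b' k \<in> K" using that unfolding U_def Rsupp_def by blast+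
    hence "b k - b' k \<in> K" by (rule ideal_diff[OF K_ideal])
    thus ?thesis using K_sub_Ann by blast
  qed
  show ?thesis
  proof
    assume "represents K J Dset r a Idx b' f"
    hence "\<forall>x\<in>(\<Pi>\<^sub>E i\<in>{..<r}. Dset i). (\<Sum>k\<in>U. (b k - b' k) * falling a r k x) \<in> J"
      using represents_iff_diff_vanishes[OF U rb] by blast
    hence "\<forall>k\<in>U. b k - b' k \<in> Ann J (Vfac k)" by (rule coefficients_in_Ann[OF U(1,4)])
    thus "\<forall>k\<in>Idx. b k - b' k \<in> Ann J (Vfac k)" using outside by blast
  next
    assume h: "\<forall>k\<in>Idx. b k - b' k \<in> Ann J (Vfac k)"
    have "(\<Sum>k\<in>U. (b k - b' k) * falling a r k x) \<in> J" if x: "x \<in> (\<Pi>\<^sub>E i\<in>{..<r}. Dset i)" for x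
    proof (rule sum_in_ideal[OF J])
      fix k assume "k \<in> U"
      hence "b k - b' k \<in> Ann J (Vfac k)" using h U(4) by blast
      thus "(b k - b' k) * falling a r k x \<in> J" using falling_in_Vfac[OF x] unfolding Ann_def by blast
    qed
    thus "represents K J Dset r a Idx b' f" using represents_iff_diff_vanishes[OF U rb] by blast
  qed
qed

lemma represents_of_expansion:
  assumes T: "finite T" "T \<subseteq> (\<Pi>\<^sub>E i\<in>{..<r}. UNIV)"
    and hB: "\<forall>x\<in>(\<Pi>\<^sub>E i\<in>{..<r}. Dset i). (\<Sum>k\<in>T. B k * falling a r k x) - f x \<in> J"
  shows "\<exists>b. finite (Rsupp K Idx b) \<and> represents K J Dset r a Idx b f"
proof -
  define b where "b k = (if k \<in> T \<inter> Idx then B k else 0)" for k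
  have Rs: "Rsupp K Idx b \<subseteq> T \<inter> Idx"
    unfolding Rsupp_def b_def using ideal_0[OF K_ideal] by auto
  have "(\<Sum>k\<in>T \<inter> Idx. b k * falling a r k x) - f x \<in> J" if x: "x \<in> (\<Pi>\<^sub>E i\<in>{..<r}. Dset i)" for x
  proof -
    have "(\<Sum>k\<in>T - T \<inter> Idx. B k * falling a r k x) \<in> J"
    proof (rule sum_in_ideal[OF J])
      fix k assume "k \<in> T - T \<inter> Idx"
      hence "falling a r k x \<in> J" using falling_notin_index_set_in_J[OF _ _ x] T(2) by blast
      thus "B k * falling a r k x \<in> J" by (rule ideal_multL[OF J])
    qed
    hence "((\<Sum>k\<in>T. B k * falling a r k x) - f x) - (\<Sum>k\<in>T - T \<inter> Idx. B k * falling a r k x) \<in> J"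
      using ideal_diff[OF J] hB x by blast
    moreover have "(\<Sum>k\<in>T \<inter> Idx. b k * falling a r k x) = (\<Sum>k\<in>T \<inter> Idx. B k * falling a r k x)"
      by (rule sum.cong) (simp_all add: b_def)
    moreover have "(\<Sum>k\<in>T. B k * falling a r k x)
        = (\<Sum>k\<in>T - T \<inter> Idx. B k * falling a r k x) + (\<Sum>k\<in>T \<inter> Idx. B k * falling a r k x)"
      by (rule sum.subset_diff[OF Int_lower1 T(1)])
    ultimately show ?thesis by (simp add: diff_diff_eq2 add.commute)
  qed
  hence "represents K J Dset r a Idx b f" using represents_iff_sum_over[OF _ Rs] T(1) by blast
  moreover have "finite (Rsupp K Idx b)" using finite_subset[OF Rs] T(1) by blast
  ultimately show ?thesis by blast
qed

lemma represents_exists: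
  assumes "polynomial_function r Dset J f"
  shows "\<exists>b. finite (Rsupp K Idx b) \<and> represents K J Dset r a Idx b f"
proof -
  obtain cp where cp: "is_mpoly r cp" "\<forall>x\<in>(\<Pi>\<^sub>E i\<in>{..<r}. Dset i). mpoly_eval r cp x - f x \<in> J"
    using assms unfolding polynomial_function_def by blast
  obtain T B where T: "finite T" "T \<subseteq> (\<Pi>\<^sub>E i\<in>{..<r}. UNIV)"
    and eval: "\<forall>x. mpoly_eval r cp x = (\<Sum>k\<in>T. B k * falling a r k x)"
    using mpoly_eval_falling_expansion[OF cp(1), where a = a] by blast
  have "\<forall>x\<in>(\<Pi>\<^sub>E i\<in>{..<r}. Dset i). (\<Sum>k\<in>T. B k * falling a r k x) - f x \<in> J"
    using cp(2) eval by simp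
  thus ?thesis by (rule represents_of_expansion[OF T])
qed

end

theorem mainTheorem2:
  fixes I :: "nat \<Rightarrow> 'a::idom set" and J K :: "'a set" and Dset :: "nat \<Rightarrow> 'a set"
    and r n :: nat and P :: "nat \<Rightarrow> 'a set" and e :: "nat \<Rightarrow> nat"
    and aa :: "nat \<Rightarrow> nat \<Rightarrow> nat \<Rightarrow> 'a" and a :: "nat \<Rightarrow> nat \<Rightarrow> 'a"
    and f :: "(nat \<Rightarrow> 'a) \<Rightarrow> 'a"
  assumes "dedekind_domain TYPE('a)"
    and "r \<ge> 1"
    and "\<forall>i<r. is_ideal (I i) \<and> I i \<noteq> {0} \<and> I i \<noteq> UNIV"
    and "is_ideal J" and "J \<noteq> {0}" and "J \<noteq> UNIV"
    and "\<forall>i<r. residue_system (I i) (Dset i) \<and> 0 \<in> Dset i"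
    and "K = (\<Inter>i<r. I i) \<inter> J"
    and "\<forall>l<n. prime_ideal (P l) \<and> P l \<noteq> {0} \<and> e l \<ge> 1"
    and "inj_on P {..<n}"
    and "K = ideal_Prod (\<lambda>l. ideal_pow (P l) (e l)) n"
    and "\<forall>l<n. \<forall>i<r. is_P_ordering K (P l) (Dset i) (aa l i) \<and> aa l i 0 = 0"
    and "\<forall>i<r. a i 0 \<in> K"
    and "\<forall>i<r. \<forall>j. \<forall>l<n. a i j - aa l i j \<in> Rpow K (P l) (e l)"
    and "polynomial_function r Dset J f"
  shows "\<exists>b. finite (Rsupp K (index_set K P n J Dset r) b)
           \<and> represents K J Dset r a (index_set K P n J Dset r) b f
           \<and> (\<forall>b'. finite (Rsupp K (index_set K P n J Dset r) b') \<longrightarrow>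
                (represents K J Dset r a (index_set K P n J Dset r) b' f \<longleftrightarrow>
                 (\<forall>k\<in>index_set K P n J Dset r.
                    b k - b' k \<in> Ann J (Rprod_fam K (\<lambda>i. vX K P n (Dset i) (k i)) r))))"
proof -
  have "K \<subseteq> J" using assms(8) by blast
  then interpret polyfun_setting J K Dset r n P e aa a
    using assms(1,4,9-12,14) unfolding polyfun_setting_def by blast
  obtain b where b: "finite (Rsupp K (index_set K P n J Dset r) b)"
    "represents K J Dset r a (index_set K P n J Dset r) b f"
    using represents_exists[OF assms(15)] by blast
  show ?thesis using b represents_iff_coefficients_congruent[OF b] by blast
qed

end
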